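(* With the setting of the context, for any $0<z<\delta\le\delta_1$, $$q_N(z,\delta):=\pi^{N,\delta}\{B_M^c(Nc,Nz)\}\le2\,\hat\zeta_N\big(z(1-e^{-1/2})/(2c_1(M))\big),$$ where $B_M^c(Nc,Nz)$ is the complement of $B_M(Nc,Nz)$.
   Context: Setting: for each $N$, $X^N$ is a pure jump Markov process on $S_N\subseteq\mathbb Z^d$, $N^{-1}S_N\subseteq\hat S$ closed; Assumption 1: finite $\mathcal J\subset\mathbb Z^d$, continuously differentiable $r_J:\hat S\to[0,\infty)$, only transitions $X\to X+J$ at rate $Nr_J(N^{-1}X)$; Assumption 2: every vector of $\mathbb Z^d$ is a finite sum of elements of $\mathcal J$; $F(y)=\sum_JJr_J(y)$; Assumption 3: $c$ in the interior of $\hat S$, $F(c)=0$, $r_J(c)>0$ for all $J$, $\rho>0$ with all eigenvalues of $\sum_JJ\nabla r_J(c)$ of real part $<-\rho$. $|\cdot|$ Euclidean norm; $\|x\|_M=(x^TMx)^{1/2}$; $B_M(z,\epsilon)=\{x:\|x-z\|_M\le\epsilon\}$; $c_1(M)^2$ largest eigenvalue of $M$. $M$ (real symmetric positive definite) and $\delta_0>0$ are fixed with $B_M(c,\delta_0)\subseteq\hat S$ such that every solution $y$ of $dy/dt=F(y)$ with $\|y(0)-c\|_M\le\delta_0$ satisfies $\frac d{dt}\|y(t)-c\|_M\le-\rho\|y(t)-c\|_M$, and for any two such solutions $\frac d{dt}\|y-z\|_M\le-\rho\|y-z\|_M$. Fix $\delta_1\in(0,\delta_0]$ and $r_0>0$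 with $r_J>r_0$ on $B_M(c,\delta_1)$. $\mathcal X_N(\delta)=\{X\in S_N:\|X-Nc\|_M\le N\delta\}$; $X^{N,\delta}$ is the chain on $\mathcal X_N(\delta)$ with the rates of $X^N$ except that transitions out of $\mathcal X_N(\delta)$ have rate zero; $\pi^{N,\delta}$ is its stationary distribution. $J^*=\max_J|J|$, $R^*(\mathcal K)=\sup_{y\in\mathcal K}\sum_Jr_J(y)$, $L(\mathcal K)=\sup_{y\in\mathcal K}|DF(y)|$, $\zeta_{N,T,\mathcal K}(z)=2d\exp\{-\frac{Nz}{2dJ^*}\min(1,\frac z{deTR^*(\mathcal K)J^*})\}$, $\hat\zeta_N(z)=\zeta_{N,\rho^{-1},B_M(c,\delta_0)}(ze^{-\rho^{-1}L(B_M(c,\delta_0))})$. *)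

theory Defs
  imports "HOL-Analysis.Analysis"
begin

definition rvec :: "int^'d \<Rightarrow> real^'d" where
  "rvec x = (\<chi> i. real_of_int (x $ i))"

definition Mnorm :: "real^'d^'d \<Rightarrow> real^'d \<Rightarrow> real" where
  "Mnorm M x = sqrt (x \<bullet> (M *v x))"

definition MBall :: "real^'d^'d \<Rightarrow> real^'d \<Rightarrow> real \<Rightarrow> (real^'d) set" where
  "MBall M z e = {x. Mnorm M (x - z) \<le> e}"

definition sym_posdef :: "real^'d^'d \<Rightarrow> bool" where
  "sym_posdef M \<longleftrightarrow> transpose M = M \<and> (\<forall>x. x \<noteq> 0 \<longrightarrow> x \<bullet> (M *v x) > 0)"

definition max_eig :: "real^'d^'d \<Rightarrow> real" where
  "max_eig M = Max {l. \<exists>v. v \<noteq> 0 \<and> M *v v = l *s v}"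

definition c1 :: "real^'d^'d \<Rightarrow> real" where
  "c1 M = sqrt (max_eig M)"

definition is_eigenvalue :: "real^'d^'d \<Rightarrow> complex \<Rightarrow> bool" where
  "is_eigenvalue A lam \<longleftrightarrow>
     (\<exists>v::complex^'d. v \<noteq> 0 \<and> (\<chi> i k. complex_of_real (A $ i $ k)) *v v = lam *s v)"

text \<open>Drift F(y) = sum_J J r_J(y) and its Jacobian, given gradients Dr J y of r J.\<close>
definition drift :: "(int^'d) set \<Rightarrow> (int^'d \<Rightarrow> real^'d \<Rightarrow> real) \<Rightarrow> real^'d \<Rightarrow> real^'d" where
  "drift JJ r y = (\<Sum>J\<in>JJ. r J y *\<^sub>R rvec J)"

definition jac :: "(int^'d) set \<Rightarrow> (int^'d \<Rightarrow> real^'d \<Rightarrow> real^'d) \<Rightarrow> real^'d \<Rightarrow> real^'d^'d" where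
  "jac JJ Dr y = (\<chi> i k. \<Sum>J\<in>JJ. real_of_int (J $ i) * (Dr J y) $ k)"

definition ode_sol :: "(real^'d \<Rightarrow> real^'d) \<Rightarrow> (real^'d) set \<Rightarrow> real \<Rightarrow> (real \<Rightarrow> real^'d) \<Rightarrow> bool" where
  "ode_sol F Shat T y \<longleftrightarrow> 0 < T \<and>
     (\<forall>t\<in>{0..T}. y t \<in> Shat \<and> (y has_vector_derivative F (y t)) (at t within {0..T}))"

definition Jstar :: "(int^'d) set \<Rightarrow> real" where
  "Jstar JJ = Max ((\<lambda>J. norm (rvec J)) ` JJ)"

definition Rstar :: "(int^'d) set \<Rightarrow> (int^'d \<Rightarrow> real^'d \<Rightarrow> real) \<Rightarrow> (real^'d) set \<Rightarrow> real" where
  "Rstar JJ r K = (SUP y\<in>K. \<Sum>J\<in>JJ. r J y)"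

definition Lconst :: "(int^'d) set \<Rightarrow> (int^'d \<Rightarrow> real^'d \<Rightarrow> real^'d) \<Rightarrow> (real^'d) set \<Rightarrow> real" where
  "Lconst JJ Dr K = (SUP y\<in>K. onorm (\<lambda>h. jac JJ Dr y *v h))"

text \<open>zeta_{N,T,K}(z) with d = dim, Rs = R*(K), Js = J*.\<close>
definition zeta :: "nat \<Rightarrow> nat \<Rightarrow> real \<Rightarrow> real \<Rightarrow> real \<Rightarrow> real \<Rightarrow> real" where
  "zeta d N T Rs Js z =
     2 * real d * exp (- (real N * z / (2 * real d * Js)) * min 1 (z / (real d * exp 1 * T * Rs * Js)))"

definition trunc_rate :: "(int^'d) set \<Rightarrow> (int^'d \<Rightarrow> real^'d \<Rightarrow> real) \<Rightarrow> nat \<Rightarrow> (int^'d) set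
     \<Rightarrow> int^'d \<Rightarrow> int^'d \<Rightarrow> real" where
  "trunc_rate JJ r N XX x y =
     (if x \<in> XX \<and> y \<in> XX then (\<Sum>J\<in>{J\<in>JJ. x + J = y}. real N * r J ((1 / real N) *\<^sub>R rvec x)) else 0)"

definition stationary :: "'a set \<Rightarrow> ('a \<Rightarrow> 'a \<Rightarrow> real) \<Rightarrow> ('a \<Rightarrow> real) \<Rightarrow> bool" where
  "stationary XX q p \<longleftrightarrow>
     (\<forall>x. 0 \<le> p x) \<and> (\<forall>x. x \<notin> XX \<longrightarrow> p x = 0) \<and> sum p XX = 1 \<and>
     (\<forall>x\<in>XX. p x * (\<Sum>y\<in>XX - {x}. q x y) = (\<Sum>y\<in>XX - {x}. p y * q y x))"

end

(*
  Differentiating |y - c|_M^2 along a local Picard solution turns the contraction hypothesis on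
  the flow of F into the dissipativity estimate  <y - c, F y>_M <= - rho |y - c|_M^2  on the ball
  B_M(c, delta0).  For the truncated chain, V = exp (theta psi) with the smoothed distance
  psi X = sqrt (|X - N c|_M^2 + s^2) then satisfies the drift condition  Q V <= theta rho V (m - psi):
  jumps leaving the truncation region only increase psi, and the second-order terms are controlled
  by K = c1(M) J* and R*.  Summing the drift condition against the stationary distribution
  (pi Q = 0) bounds pi {psi > N z} by exp (- theta N z / 2); with theta and s chosen suitably this
  is at most the stated zeta bound.  When N z^2 rho is small compared with R* K^2, the zeta bound
  exceeds 1 and there is nothing to prove.
*)

theory Submission
  imports Defs
begin

section \<open>The M-inner product and the M-norm\<close>

definition Minner :: "real^'d^'d \<Rightarrow> real^'d \<Rightarrow> real^'d \<Rightarrow> real" where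
  "Minner M x y = x \<bullet> (M *v y)"

lemma Minner_commute:
  assumes "transpose M = M" shows "Minner M x y = Minner M y x"
  by (metis Minner_def assms dot_lmul_matrix inner_commute transpose_matrix_vector)

lemma Minner_add_left: "Minner M (x + y) z = Minner M x z + Minner M y z"
  and Minner_add_right: "Minner M z (x + y) = Minner M z x + Minner M z y"
  and Minner_diff_left: "Minner M (x - y) z = Minner M x z - Minner M y z"
  and Minner_diff_right: "Minner M z (x - y) = Minner M z x - Minner M z y"
  and Minner_scaleR_left: "Minner M (a *\<^sub>R x) z = a * Minner M x z"
  and Minner_scaleR_right: "Minner M z (a *\<^sub>R x) = a * Minner M z x"
  by (simp_all add: Minner_def inner_add_left inner_add_right inner_diff_left inner_diff_right
      matrix_vector_right_distrib matrix_vector_mult_diff_distrib matrix_vector_mult_scaleR)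

lemma Minner_zero_right [simp]: "Minner M x 0 = 0"
  by (simp add: Minner_def)

lemma Minner_sum_right: "Minner M v (\<Sum>J\<in>A. f J) = (\<Sum>J\<in>A. Minner M v (f J))"
  by (induct A rule: infinite_finite_induct) (simp_all add: Minner_add_right)

lemma Minner_self_pos: "sym_posdef M \<Longrightarrow> x \<noteq> 0 \<Longrightarrow> 0 < Minner M x x"
  by (simp add: sym_posdef_def Minner_def)

lemma Minner_self_nonneg:
  assumes "sym_posdef M" shows "0 \<le> Minner M x x"
proof (cases "x = 0")
  case False
  then show ?thesis using Minner_self_pos[OF assms False] by simp
qed simp

lemma continuous_on_Minner:
  "continuous_on S f \<Longrightarrow> continuous_on S g \<Longrightarrow> continuous_on S (\<lambda>x. Minner M (f x) (g x))"
  unfolding Minner_def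
  by (intro continuous_intros continuous_on_compose2[OF matrix_vector_mult_linear_continuous_on]) auto

lemma Mnorm_eq_sqrt_Minner: "Mnorm M x = sqrt (Minner M x x)"
  by (simp add: Mnorm_def Minner_def)

lemma Mnorm_zero [simp]: "Mnorm M 0 = 0"
  by (simp add: Mnorm_def)

lemma Mnorm_nonneg: "sym_posdef M \<Longrightarrow> 0 \<le> Mnorm M x"
  using Minner_self_nonneg[of M x] by (simp add: Mnorm_eq_sqrt_Minner)

lemma Mnorm_power2: "sym_posdef M \<Longrightarrow> (Mnorm M x)\<^sup>2 = Minner M x x"
  using Minner_self_nonneg[of M x] by (simp add: Mnorm_eq_sqrt_Minner)

lemma Mnorm_scaleR: "sym_posdef M \<Longrightarrow> Mnorm M (a *\<^sub>R x) = \<bar>a\<bar> * Mnorm M x"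
  by (simp add: Mnorm_eq_sqrt_Minner Minner_scaleR_left Minner_scaleR_right real_sqrt_mult
      flip: mult.assoc power2_eq_square)

lemma Mnorm_add_power2:
  assumes "sym_posdef M"
  shows "(Mnorm M (x + y))\<^sup>2 = (Mnorm M x)\<^sup>2 + 2 * Minner M x y + (Mnorm M y)\<^sup>2"
  using assms Minner_commute[of M x y]
  by (simp add: sym_posdef_def Mnorm_power2 Minner_add_left Minner_add_right)

lemma continuous_on_Mnorm: "continuous_on S (\<lambda>x. Mnorm M (f x))" if "continuous_on S f"
  unfolding Mnorm_eq_sqrt_Minner by (intro continuous_intros continuous_on_Minner that)

lemma abs_Minner_le_Mnorm:
  assumes M: "sym_posdef M"
  shows "\<bar>Minner M x y\<bar> \<le> Mnorm M x * Mnorm M y"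
proof (cases "y = 0")
  case True
  then show ?thesis by (simp add: Minner_def)
next
  case False
  define b where "b = Minner M x y"
  define q where "q = Minner M y y"
  have q: "q > 0" using Minner_self_pos[OF M False] by (simp add: q_def)
  have "0 \<le> Minner M (x - (b / q) *\<^sub>R y) (x - (b / q) *\<^sub>R y)"
    by (rule Minner_self_nonneg[OF M])
  also have "\<dots> = Minner M x x - b\<^sup>2 / q"
    using q M Minner_commute[of M y x]
    by (simp add: sym_posdef_def Minner_diff_left Minner_diff_right Minner_scaleR_left
        Minner_scaleR_right b_def q_def power2_eq_square field_simps)
  finally have "b\<^sup>2 \<le> Minner M x x * q" using q by (simp add: field_simps)
  then have "sqrt (b\<^sup>2) \<le> sqrt (Minner M x x) * sqrt q"
    by (metis real_sqrt_le_mono real_sqrt_mult)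
  then show ?thesis by (simp add: Mnorm_eq_sqrt_Minner b_def q_def)
qed

lemma linear_coeff_eq_0_if_quadratic_nonpos:
  fixes a b :: real
  assumes "\<And>t. 2 * t * a + t\<^sup>2 * b \<le> 0"
  shows "a = 0"
proof -
  define c where "c = \<bar>b\<bar> + 1"
  have c: "c > 0" "2 * c + b > 0" unfolding c_def by (cases "b \<ge> 0"; simp)+
  have "(2 * (a / c) * a + (a / c)\<^sup>2 * b) * c\<^sup>2 = a\<^sup>2 * (2 * c + b)"
    using c by (simp add: power2_eq_square field_simps)
  moreover have "(2 * (a / c) * a + (a / c)\<^sup>2 * b) * c\<^sup>2 \<le> 0"
    using assms[of "a / c"] by (simp add: mult_nonpos_nonneg)
  ultimately have "a\<^sup>2 \<le> 0" using c by (simp add: mult_le_0_iff)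
  then show ?thesis by simp
qed

lemma Minner_Rayleigh_attains:
  fixes M :: "real^'d^'d"
  obtains u v where "norm u = 1" "norm v = 1"
    "\<And>x. Minner M u u * (norm x)\<^sup>2 \<le> Minner M x x" "\<And>x. Minner M x x \<le> Minner M v v * (norm x)\<^sup>2"
proof -
  have "axis undefined 1 \<in> sphere (0::real^'d) 1" by simp
  then have sphere: "compact (sphere (0::real^'d) 1)" "sphere (0::real^'d) 1 \<noteq> {}" by auto
  have cont: "continuous_on (sphere 0 1) (\<lambda>x. Minner M x x)"
    by (intro continuous_on_Minner continuous_on_id)
  obtain u where u: "u \<in> sphere 0 1" "\<And>y. y \<in> sphere 0 1 \<Longrightarrow> Minner M u u \<le> Minner M y y"
    using continuous_attains_inf[OF sphere cont] by blast
  obtain v where v: "v \<in> sphere 0 1" "\<And>y. y \<in> sphere 0 1 \<Longrightarrow> Minner M y y \<le> Minner M v v"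
    using continuous_attains_sup[OF sphere cont] by blast
  have homog: "Minner M x x = (norm x)\<^sup>2 * Minner M (x /\<^sub>R norm x) (x /\<^sub>R norm x)"
    and unit: "x /\<^sub>R norm x \<in> sphere 0 1" if "x \<noteq> 0" for x
  proof -
    have "x = norm x *\<^sub>R (x /\<^sub>R norm x)" using that by simp
    then show "Minner M x x = (norm x)\<^sup>2 * Minner M (x /\<^sub>R norm x) (x /\<^sub>R norm x)"
      by (metis Minner_scaleR_left Minner_scaleR_right mult.assoc power2_eq_square)
    show "x /\<^sub>R norm x \<in> sphere 0 1" using that by simp
  qed
  have "Minner M u u * (norm x)\<^sup>2 \<le> Minner M x x" for x
    using mult_left_mono[OF u(2)[OF unit], where c = "(norm x)\<^sup>2"] homog[of x]
    by (cases "x = 0") (simp_all add: mult.commute)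
  moreover have "Minner M x x \<le> Minner M v v * (norm x)\<^sup>2" for x
    using mult_left_mono[OF v(2)[OF unit], where c = "(norm x)\<^sup>2"] homog[of x]
    by (cases "x = 0") (simp_all add: mult.commute)
  ultimately show ?thesis using that u(1) v(1) by simp
qed

lemma sym_posdef_top_eigenvector:
  fixes M :: "real^'d^'d"
  assumes M: "sym_posdef M"
  obtains lam v where "v \<noteq> 0" "M *v v = lam *s v" "0 < lam" "\<And>x. Minner M x x \<le> lam * (norm x)\<^sup>2"
proof -
  obtain v where v: "norm v = 1" and max: "\<And>x. Minner M x x \<le> Minner M v v * (norm x)\<^sup>2"
    using Minner_Rayleigh_attains by metis
  define lam where "lam = Minner M v v"
  have sym: "transpose M = M" using M by (simp add: sym_posdef_def)
  \<comment> \<open>First-order condition at the maximiser v of the Rayleigh quotient.\<close>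
  have "(M *v v - lam *\<^sub>R v) \<bullet> h = 0" for h
  proof (rule linear_coeff_eq_0_if_quadratic_nonpos)
    fix t
    have "Minner M (v + t *\<^sub>R h) (v + t *\<^sub>R h) \<le> lam * (norm (v + t *\<^sub>R h))\<^sup>2"
      using max by (simp add: lam_def)
    moreover have "(norm (v + t *\<^sub>R h))\<^sup>2 = 1 + 2 * t * (v \<bullet> h) + t\<^sup>2 * (norm h)\<^sup>2"
    proof -
      have "v \<bullet> v = 1" using v by (simp add: dot_square_norm)
      then show ?thesis unfolding power2_norm_eq_inner
        by (simp add: inner_add_left inner_add_right inner_commute[of h v] power2_eq_square algebra_simps)
    qed
    ultimately show "2 * t * ((M *v v - lam *\<^sub>R v) \<bullet> h) + t\<^sup>2 * (Minner M h h - lam * (norm h)\<^sup>2) \<le> 0"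
      using Minner_commute[OF sym, of v h]
      by (simp add: Minner_add_left Minner_add_right Minner_scaleR_left Minner_scaleR_right
          inner_diff_left inner_commute[of "M *v v" h] lam_def Minner_def power2_eq_square algebra_simps)
  qed
  from this[of "M *v v - lam *\<^sub>R v"] have "M *v v = lam *s v"
    by (simp add: scalar_mult_eq_scaleR)
  moreover have "v \<noteq> 0" using v by auto
  moreover have "0 < lam" using Minner_self_pos[OF M \<open>v \<noteq> 0\<close>] by (simp add: lam_def)
  ultimately show ?thesis using that max lam_def by blast
qed

lemma finite_eigenvalues_sym:
  fixes M :: "real^'d^'d"
  assumes sym: "transpose M = M"
  shows "finite {l. \<exists>v. v \<noteq> 0 \<and> M *v v = l *s v}"
proof -
  define E where "E = {l. \<exists>v. v \<noteq> 0 \<and> M *v v = l *\<^sub>R v}"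
  define ev where "ev l = (SOME v. v \<noteq> 0 \<and> M *v v = l *\<^sub>R v)" for l
  have ev: "ev l \<noteq> 0" "M *v ev l = l *\<^sub>R ev l" if "l \<in> E" for l
    using someI_ex[of "\<lambda>v. v \<noteq> 0 \<and> M *v v = l *\<^sub>R v"] that by (auto simp: E_def ev_def)
  have orth: "ev l \<bullet> ev m = 0" if "l \<in> E" "m \<in> E" "l \<noteq> m" for l m
  proof -
    have "l * (ev l \<bullet> ev m) = Minner M (ev m) (ev l)"
      by (simp add: Minner_def ev[OF that(1)] inner_commute)
    also have "\<dots> = m * (ev l \<bullet> ev m)"
      by (subst Minner_commute[OF sym]) (simp add: Minner_def ev[OF that(2)])
    finally show ?thesis using that(3) by simp
  qed
  have "inj_on ev E"
    by (rule inj_onI) (metis ev(1) inner_eq_zero_iff orth)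
  moreover have "independent (ev ` E)"
    by (rule pairwise_orthogonal_independent) (auto simp: pairwise_def orthogonal_def intro!: orth dest: ev(1))
  ultimately have "finite E"
    using finiteI_independent finite_imageD by blast
  then show ?thesis by (simp add: E_def scalar_mult_eq_scaleR)
qed

lemma
  fixes M :: "real^'d^'d"
  assumes M: "sym_posdef M"
  shows c1_pos: "0 < c1 M" and Mnorm_le_c1_norm: "Mnorm M x \<le> c1 M * norm x"
proof -
  obtain v lam where v: "v \<noteq> 0" "M *v v = lam *s v" "0 < lam"
    and top: "\<And>x. Minner M x x \<le> lam * (norm x)\<^sup>2"
    using sym_posdef_top_eigenvector[OF M] by metis
  have "lam \<le> max_eig M"
    unfolding max_eig_def using finite_eigenvalues_sym M v(1,2)
    by (intro Max_ge) (auto simp: sym_posdef_def)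
  then have le: "sqrt lam \<le> c1 M" by (simp add: c1_def)
  then show "0 < c1 M" using v(3) by (meson less_le_trans real_sqrt_gt_zero)
  have "Mnorm M x \<le> sqrt (lam * (norm x)\<^sup>2)"
    unfolding Mnorm_eq_sqrt_Minner by (rule real_sqrt_le_mono[OF top])
  also have "\<dots> \<le> c1 M * norm x" using le by (simp add: real_sqrt_mult mult_right_mono)
  finally show "Mnorm M x \<le> c1 M * norm x" .
qed

lemma compact_MBall:
  fixes M :: "real^'d^'d"
  assumes M: "sym_posdef M" and \<delta>: "0 \<le> \<delta>"
  shows "compact (MBall M c \<delta>)"
proof -
  obtain u where u: "norm u = 1" and bot: "\<And>x. Minner M u u * (norm x)\<^sup>2 \<le> Minner M x x"
    using Minner_Rayleigh_attains by metis
  define mu where "mu = Minner M u u"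
  have "u \<noteq> 0" using u by auto
  then have mu: "0 < mu" using Minner_self_pos[OF M] by (simp add: mu_def)
  have "closed (MBall M c \<delta>)" unfolding MBall_def
    by (intro closed_Collect_le continuous_on_Mnorm continuous_intros)
  moreover have "MBall M c \<delta> \<subseteq> cball c (\<delta> / sqrt mu)"
  proof
    fix x assume x: "x \<in> MBall M c \<delta>"
    have "mu * (norm (x - c))\<^sup>2 \<le> (Mnorm M (x - c))\<^sup>2"
      using bot[of "x - c"] Mnorm_power2[OF M] by (simp add: mu_def)
    also have "\<dots> \<le> \<delta>\<^sup>2" using x Mnorm_nonneg[OF M] by (auto simp: MBall_def intro: power_mono)
    finally have "sqrt mu * norm (x - c) \<le> \<delta>"
      using \<delta> mu by (metis real_sqrt_le_mono real_sqrt_mult real_sqrt_pow2_iff norm_ge_zero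
          mult_nonneg_nonneg less_imp_le real_sqrt_abs abs_of_nonneg zero_le_power2)
    then show "x \<in> cball c (\<delta> / sqrt mu)"
      using mu by (simp add: dist_norm norm_minus_commute field_simps)
  qed
  then have "bounded (MBall M c \<delta>)" using bounded_cball bounded_subset by blast
  ultimately show ?thesis by (simp add: compact_eq_bounded_closed)
qed

section \<open>Local existence for Lipschitz ODEs\<close>

lemma norm_integral_lipschitz_diff_le:
  fixes G :: "'a::euclidean_space \<Rightarrow> 'a"
  assumes lip: "K-lipschitz_on UNIV G" and cont: "continuous_on {0..t} f" "continuous_on {0..t} g"
    and t: "0 \<le> t" and D: "\<And>s. s \<in> {0..t} \<Longrightarrow> norm (f s - g s) \<le> D"
  shows "norm (integral {0..t} (\<lambda>s. G (f s)) - integral {0..t} (\<lambda>s. G (g s))) \<le> K * D * t"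
proof -
  have contG: "continuous_on {0..t} (\<lambda>s. G (f s))" "continuous_on {0..t} (\<lambda>s. G (g s))"
    using cont by (auto intro: continuous_on_compose2[OF lipschitz_on_continuous_on[OF lip]])
  have "norm (integral {0..t} (\<lambda>s. G (f s) - G (g s))) \<le> (K * D) * (t - 0)"
  proof (rule integral_bound)
    show "norm (G (f s) - G (g s)) \<le> K * D" if "s \<in> {0..t}" for s
      using lipschitz_on_normD[OF lip, of "f s" "g s"] D[OF that] lipschitz_on_nonneg[OF lip]
      by (auto intro: order_trans mult_left_mono)
  qed (use t contG in \<open>auto intro: continuous_intros\<close>)
  then show ?thesis
    using integral_diff[OF integrable_continuous_real integrable_continuous_real, OF contG] by simp
qed

lemma bounded_lipschitz_integral_equation_solvable:
  fixes G :: "'a::euclidean_space \<Rightarrow> 'a"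
  assumes lip: "K-lipschitz_on UNIV G" and bound: "\<And>a. norm (G a) \<le> B"
    and h: "0 < h" "K * h \<le> 1 / 2"
  obtains y where "continuous_on UNIV y" "\<And>t. t \<in> {0..h} \<Longrightarrow> y t = z + integral {0..t} (\<lambda>s. G (y s))"
proof -
  have K: "0 \<le> K" using lipschitz_on_nonneg[OF lip] .
  \<comment> \<open>Freezing time outside [0, h] makes the Picard operator act on bounded continuous functions.\<close>
  define u where "u t = max 0 (min h t)" for t :: real
  have u: "u t \<in> {0..h}" for t using h by (auto simp: u_def)
  have contu: "continuous_on UNIV u" unfolding u_def by (intro continuous_intros)
  have contG: "continuous_on UNIV (\<lambda>s. G (apply_bcontfun f s))" for f :: "real \<Rightarrow>\<^sub>C 'a"
    by (rule continuous_on_compose2[OF lipschitz_on_continuous_on[OF lip]]) auto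
  define Phi0 where "Phi0 f t = z + integral {0..u t} (\<lambda>s. G (apply_bcontfun f s))" for f t
  have Phi0_bcontfun: "Phi0 f \<in> bcontfun" for f
  proof (rule bcontfun_normI)
    have "continuous_on {0..h} (\<lambda>t. integral {0..t} (\<lambda>s. G (apply_bcontfun f s)))"
      by (intro indefinite_integral_continuous_1 integrable_continuous_real continuous_on_subset[OF contG])
        auto
    then show "continuous_on UNIV (Phi0 f)"
      unfolding Phi0_def using continuous_on_compose2[OF _ contu, of "{0..h}"] u
      by (intro continuous_intros) blast
    fix t
    have "norm (integral {0..u t} (\<lambda>s. G (apply_bcontfun f s))) \<le> B * (u t - 0)"
      by (rule integral_bound) (use u[of t] bound in \<open>auto intro: continuous_on_subset[OF contG]\<close>)
    then have "norm (Phi0 f t) \<le> norm z + B * u t"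
      unfolding Phi0_def by (intro order_trans[OF norm_triangle_ineq]) auto
    also have "\<dots> \<le> norm z + \<bar>B\<bar> * h" using u[of t] by (intro add_left_mono mult_mono) auto
    finally show "norm (Phi0 f t) \<le> norm z + \<bar>B\<bar> * h" .
  qed
  define Phi where "Phi f = Bcontfun (Phi0 f)" for f
  have Phi_apply: "apply_bcontfun (Phi f) t = Phi0 f t" for f t
    using Phi0_bcontfun[of f] by (simp add: Phi_def Bcontfun_inverse)
  have "dist (Phi f) (Phi g) \<le> 1 / 2 * dist f g" for f g
  proof (rule dist_bound)
    fix t
    have "norm (Phi0 f t - Phi0 g t) \<le> K * dist f g * u t"
      unfolding Phi0_def using u[of t] dist_bounded[of f _ g]
      by (simp, intro norm_integral_lipschitz_diff_le[OF lip]) (auto simp: dist_norm)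
    also have "\<dots> \<le> (K * dist f g) * h" using u[of t] K by (intro mult_left_mono) auto
    also have "\<dots> = (K * h) * dist f g" by (simp add: mult_ac)
    also have "\<dots> \<le> 1 / 2 * dist f g" using h(2) by (intro mult_right_mono) auto
    finally show "dist (apply_bcontfun (Phi f) t) (apply_bcontfun (Phi g) t) \<le> 1 / 2 * dist f g"
      by (simp add: Phi_apply dist_norm)
  qed
  then obtain Y where Y: "Phi Y = Y" using banach_fix_type[of "1 / 2" Phi] by auto
  show ?thesis
  proof (rule that[of "apply_bcontfun Y"])
    fix t assume "t \<in> {0..h}"
    then have "u t = t" by (auto simp: u_def)
    then show "apply_bcontfun Y t = z + integral {0..t} (\<lambda>s. G (apply_bcontfun Y s))"
      using Phi_apply[of Y t] by (simp add: Y Phi0_def)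
  qed simp
qed

lemma lipschitz_on_cball_bounded_extension:
  fixes F :: "'a::euclidean_space \<Rightarrow> 'b::real_normed_vector"
  assumes \<epsilon>: "0 < \<epsilon>" and lip: "K-lipschitz_on (cball y0 \<epsilon>) F"
  obtains G B where "K-lipschitz_on UNIV G" "0 < B" "\<And>a. norm (G a) \<le> B"
    "\<And>a. a \<in> cball y0 \<epsilon> \<Longrightarrow> G a = F a"
proof -
  define C where "C = cball y0 \<epsilon>"
  have C: "convex C" "closed C" "C \<noteq> {}" "compact C" using \<epsilon> by (auto simp: C_def)
  obtain B where B: "0 < B" "\<And>a. a \<in> C \<Longrightarrow> norm (F a) \<le> B"
  proof -
    have "bounded (F ` C)"
      using compact_continuous_image[OF lipschitz_on_continuous_on[OF lip]] C(4)
      by (simp add: C_def compact_imp_bounded)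
    then obtain B0 where "\<And>a. a \<in> C \<Longrightarrow> norm (F a) \<le> B0" by (auto simp: bounded_iff)
    then show ?thesis using that[of "\<bar>B0\<bar> + 1"] by fastforce
  qed
  define P where "P = closest_point C"
  have P: "P a \<in> C" "1-lipschitz_on UNIV P" for a
    using closest_point_in_set[OF C(2,3)] closest_point_lipschitz[OF C(1,2,3)]
    by (auto simp: P_def intro!: lipschitz_onI)
  have "(K * 1)-lipschitz_on UNIV (\<lambda>a. F (P a))"
    by (rule lipschitz_on_compose2[OF P(2) lipschitz_on_subset[OF lip]]) (use P(1) in \<open>auto simp: C_def\<close>)
  then show ?thesis
    using that[of "\<lambda>a. F (P a)" B] B P(1) by (auto simp: P_def C_def closest_point_self)
qed

lemma lipschitz_ode_local_existence:
  fixes F :: "'a::euclidean_space \<Rightarrow> 'a"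
  assumes \<epsilon>: "0 < \<epsilon>" and lip: "K-lipschitz_on (cball y0 \<epsilon>) F"
  obtains h y where "0 < h" "y 0 = y0"
    "\<And>t. t \<in> {0..h} \<Longrightarrow> y t \<in> cball y0 \<epsilon>"
    "\<And>t. t \<in> {0..h} \<Longrightarrow> (y has_vector_derivative F (y t)) (at t within {0..h})"
proof -
  obtain G B where lipG: "K-lipschitz_on UNIV G" and B: "0 < B" "\<And>a. norm (G a) \<le> B"
    and GF: "\<And>a. a \<in> cball y0 \<epsilon> \<Longrightarrow> G a = F a"
    using lipschitz_on_cball_bounded_extension[OF \<epsilon> lip] by blast
  have K: "0 \<le> K" using lipschitz_on_nonneg[OF lip] .
  define h where "h = min (\<epsilon> / B) (1 / (2 * K + 2))"
  have h: "0 < h" "h * B \<le> \<epsilon>" "K * h \<le> 1 / 2"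
  proof -
    show "0 < h" "h * B \<le> \<epsilon>" using \<epsilon> B K by (auto simp: h_def min_def field_simps)
    have "K * h \<le> K * (1 / (2 * K + 2))" using K by (intro mult_left_mono) (auto simp: h_def)
    also have "\<dots> \<le> 1 / 2" using K by (simp add: field_simps)
    finally show "K * h \<le> 1 / 2" .
  qed
  obtain y where cont: "continuous_on UNIV y"
    and y: "\<And>t. t \<in> {0..h} \<Longrightarrow> y t = y0 + integral {0..t} (\<lambda>s. G (y s))"
    using bounded_lipschitz_integral_equation_solvable[OF lipG B(2) h(1), where z = y0] h(3) by auto
  have contG: "continuous_on {0..h} (\<lambda>s. G (y s))"
    using continuous_on_compose2[OF lipschitz_on_continuous_on[OF lipG] continuous_on_subset[OF cont]] by auto
  have in_ball: "y t \<in> cball y0 \<epsilon>" if t: "t \<in> {0..h}" for t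
  proof -
    have "norm (y t - y0) \<le> B * t"
      using y[OF t] integral_bound[of 0 t "\<lambda>s. G (y s)" B] continuous_on_subset[OF contG] t B(2) by auto
    also have "\<dots> \<le> \<epsilon>" using t h(2) B(1) by (auto simp: mult.commute intro: order_trans[OF mult_left_mono])
    finally show ?thesis by (simp add: dist_norm norm_minus_commute)
  qed
  have "(y has_vector_derivative F (y t)) (at t within {0..h})" if t: "t \<in> {0..h}" for t
  proof -
    have "((\<lambda>t. y0 + integral {0..t} (\<lambda>s. G (y s))) has_vector_derivative G (y t)) (at t within {0..h})"
      using integral_has_vector_derivative[OF contG t] by (intro derivative_eq_intros) auto
    then have "(y has_vector_derivative G (y t)) (at t within {0..h})"
      by (rule has_vector_derivative_transform_within[where d = 1]) (use t y in auto)
    then show ?thesis using GF[OF in_ball[OF t]] by simp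
  qed
  moreover have "y 0 = y0" using y[of 0] h(1) by simp
  ultimately show ?thesis using that h(1) in_ball by blast
qed

section \<open>Dissipativity of the drift\<close>

lemma lipschitz_on_sum:
  fixes f :: "'i \<Rightarrow> 'a::metric_space \<Rightarrow> 'b::real_normed_vector"
  assumes "finite I" "\<And>i. i \<in> I \<Longrightarrow> (C i)-lipschitz_on U (f i)"
  shows "(\<Sum>i\<in>I. C i)-lipschitz_on U (\<lambda>x. \<Sum>i\<in>I. f i x)"
  using assms by (induct I rule: finite_induct) (auto intro!: lipschitz_on_add lipschitz_on_constant)

lemma lipschitz_on_scaleR_const:
  fixes f :: "'a::metric_space \<Rightarrow> real"
  assumes "C-lipschitz_on U f"
  shows "(C * norm v)-lipschitz_on U (\<lambda>x. f x *\<^sub>R v)"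
proof (rule lipschitz_onI)
  fix x y assume "x \<in> U" "y \<in> U"
  then have "\<bar>f x - f y\<bar> * norm v \<le> C * dist x y * norm v"
    using lipschitz_onD[OF assms] by (intro mult_right_mono) (auto simp: dist_real_def)
  then show "dist (f x *\<^sub>R v) (f y *\<^sub>R v) \<le> C * norm v * dist x y"
    by (simp add: dist_norm flip: scaleR_diff_left) (simp add: mult_ac)
qed (use lipschitz_on_nonneg[OF assms] in simp)

lemma lipschitz_on_drift:
  assumes "finite JJ" "\<And>J. J \<in> JJ \<Longrightarrow> (C J)-lipschitz_on U (r J)"
  shows "(\<Sum>J\<in>JJ. C J * norm (rvec J))-lipschitz_on U (drift JJ r)"
  unfolding drift_def using assms by (intro lipschitz_on_sum lipschitz_on_scaleR_const)

lemma continuous_on_drift: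
  "(\<And>J. J \<in> JJ \<Longrightarrow> continuous_on S (r J)) \<Longrightarrow> continuous_on S (drift JJ r)"
  unfolding drift_def by (intro continuous_intros) auto

lemma C1_lipschitz_on_compact_convex:
  fixes f :: "'a::euclidean_space \<Rightarrow> real"
  assumes deriv: "\<And>y. y \<in> S \<Longrightarrow> (f has_derivative (\<lambda>h. f' y \<bullet> h)) (at y within S)"
    and cont: "continuous_on S f'" and K: "compact K" "convex K" "K \<subseteq> S"
  obtains C where "C-lipschitz_on K f"
proof -
  have "bounded (f' ` K)"
    using K by (intro compact_imp_bounded compact_continuous_image continuous_on_subset[OF cont])
  then obtain B where B: "\<And>y. y \<in> K \<Longrightarrow> norm (f' y) \<le> B" by (auto simp: bounded_iff)
  have "\<bar>B\<bar>-lipschitz_on K f"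
  proof (rule bounded_derivative_imp_lipschitz[OF _ K(2)])
    show "(f has_derivative (\<lambda>h. f' y \<bullet> h)) (at y within K)" if "y \<in> K" for y
      using has_derivative_subset[OF deriv K(3)] K(3) that by blast
    show "onorm (\<lambda>h. f' y \<bullet> h) \<le> \<bar>B\<bar>" if "y \<in> K" for y
      using onorm_le[of "\<lambda>h. f' y \<bullet> h" "norm (f' y)"] B[OF that]
      by (auto simp: Cauchy_Schwarz_ineq2 intro: order_trans)
  qed simp
  then show ?thesis using that by blast
qed

lemma has_real_derivative_Mnorm_power2:
  fixes y :: "real \<Rightarrow> real^'d"
  assumes M: "sym_posdef M" and y: "(y has_vector_derivative v) (at t within T)"
  shows "((\<lambda>s. (Mnorm M (y s - c))\<^sup>2) has_real_derivative 2 * Minner M (y t - c) v) (at t within T)"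
proof -
  have lin: "bounded_linear ((*v) M)"
    by (simp add: matrix_vector_mult_linear_continuous_at linear_conv_bounded_linear)
  have w: "((\<lambda>s. y s - c) has_derivative (\<lambda>h. h *\<^sub>R v)) (at t within T)"
    using has_derivative_diff[OF y[unfolded has_vector_derivative_def] has_derivative_const] by simp
  have "((\<lambda>s. (y s - c) \<bullet> (M *v (y s - c))) has_derivative
      (\<lambda>h. (y t - c) \<bullet> (M *v (h *\<^sub>R v)) + (h *\<^sub>R v) \<bullet> (M *v (y t - c)))) (at t within T)"
    by (rule has_derivative_inner[OF w bounded_linear.has_derivative[OF lin w]])
  moreover have "(\<lambda>h. (y t - c) \<bullet> (M *v (h *\<^sub>R v)) + (h *\<^sub>R v) \<bullet> (M *v (y t - c)))
      = (*) (2 * Minner M (y t - c) v)"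
    using M Minner_commute[of M v "y t - c"]
    by (auto simp: sym_posdef_def Minner_def matrix_vector_mult_scaleR)
  ultimately show ?thesis
    by (simp add: has_field_derivative_def Mnorm_power2[OF M] Minner_def)
qed

lemma Minner_le_of_norm_decreasing_flows:
  fixes F :: "real^'d \<Rightarrow> real^'d"
  assumes M: "sym_posdef M"
    and lipF: "\<And>y0 \<epsilon>. cball y0 \<epsilon> \<subseteq> S \<Longrightarrow> \<exists>K. K-lipschitz_on (cball y0 \<epsilon>) F"
    and flows: "\<And>T y. ode_sol F S T y \<Longrightarrow> Mnorm M (y 0 - c) \<le> \<delta> \<Longrightarrow>
        \<forall>t\<in>{0..T}. \<exists>D. ((\<lambda>s. Mnorm M (y s - c)) has_real_derivative D) (at t within {0..T})
                       \<and> D \<le> - \<rho> * Mnorm M (y t - c)"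
    and y0: "y0 \<in> interior S" "Mnorm M (y0 - c) \<le> \<delta>"
  shows "Minner M (y0 - c) (F y0) \<le> - \<rho> * (Mnorm M (y0 - c))\<^sup>2"
proof -
  obtain \<epsilon> where \<epsilon>: "0 < \<epsilon>" "cball y0 \<epsilon> \<subseteq> S"
    using y0(1) by (meson mem_interior_cball)
  obtain K where "K-lipschitz_on (cball y0 \<epsilon>) F" using lipF[OF \<epsilon>(2)] by blast
  then obtain h y where h: "0 < h" and y: "y 0 = y0" "\<And>t. t \<in> {0..h} \<Longrightarrow> y t \<in> cball y0 \<epsilon>"
      "\<And>t. t \<in> {0..h} \<Longrightarrow> (y has_vector_derivative F (y t)) (at t within {0..h})"
    using lipschitz_ode_local_existence[OF \<epsilon>(1)] by metis
  have "ode_sol F S h y" unfolding ode_sol_def using h y \<epsilon>(2) by blast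
  moreover have 0: "0 \<in> {0..h}" using h by simp
  ultimately obtain D where D: "((\<lambda>s. Mnorm M (y s - c)) has_real_derivative D) (at 0 within {0..h})"
      "D \<le> - \<rho> * Mnorm M (y0 - c)"
    using flows y0(2) y(1) by blast
  have "((\<lambda>s. (Mnorm M (y s - c))\<^sup>2) has_real_derivative 2 * Mnorm M (y0 - c) * D) (at 0 within {0..h})"
    using DERIV_power[OF D(1), of 2] y(1) by (simp add: mult_ac)
  moreover have "((\<lambda>s. (Mnorm M (y s - c))\<^sup>2) has_real_derivative 2 * Minner M (y0 - c) (F y0))
      (at 0 within {0..h})"
    using has_real_derivative_Mnorm_power2[OF M y(3)[OF 0]] y(1) by simp
  ultimately have "Minner M (y0 - c) (F y0) = Mnorm M (y0 - c) * D"
    using vector_derivative_unique_within_closed_interval[of 0 h 0] h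
    by (fastforce simp: has_real_derivative_iff_has_vector_derivative)
  also have "\<dots> \<le> Mnorm M (y0 - c) * (- \<rho> * Mnorm M (y0 - c))"
    using D(2) Mnorm_nonneg[OF M] by (intro mult_left_mono) auto
  finally show ?thesis by (simp add: power2_eq_square mult_ac)
qed

lemma MBall_subset_closure:
  assumes M: "sym_posdef M" and \<delta>: "0 < \<delta>"
  shows "MBall M c \<delta> \<subseteq> closure {y. Mnorm M (y - c) < \<delta>}"
proof
  fix y0 assume y0: "y0 \<in> MBall M c \<delta>"
  define a where "a n = 1 - inverse (real (Suc n))" for n
  have a: "0 \<le> a n" "a n < 1" for n by (auto simp: a_def field_simps)
  define ys where "ys n = c + a n *\<^sub>R (y0 - c)" for n
  have "Mnorm M (ys n - c) < \<delta>" for n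
  proof -
    have "Mnorm M (ys n - c) = a n * Mnorm M (y0 - c)"
      using a(1) by (simp add: ys_def Mnorm_scaleR[OF M])
    also have "\<dots> < \<delta>"
    proof (cases "Mnorm M (y0 - c) = 0")
      case False
      then have "a n * Mnorm M (y0 - c) < Mnorm M (y0 - c)"
        using a(2) Mnorm_nonneg[OF M, of "y0 - c"] by simp
      then show ?thesis using y0 by (simp add: MBall_def)
    qed (use \<delta> in simp)
    finally show ?thesis .
  qed
  moreover have "ys \<longlonglongrightarrow> c + (1 - 0) *\<^sub>R (y0 - c)"
    unfolding ys_def a_def by (intro tendsto_intros LIMSEQ_inverse_real_of_nat)
  ultimately show "y0 \<in> closure {y. Mnorm M (y - c) < \<delta>}"
    unfolding closure_sequential by (intro exI[of _ ys]) simp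
qed

lemma Minner_le_on_MBall_of_norm_decreasing_flows:
  fixes F :: "real^'d \<Rightarrow> real^'d"
  assumes M: "sym_posdef M" and \<delta>: "0 < \<delta>" and ball: "MBall M c \<delta> \<subseteq> S"
    and contF: "continuous_on S F"
    and lipF: "\<And>y0 \<epsilon>. cball y0 \<epsilon> \<subseteq> S \<Longrightarrow> \<exists>K. K-lipschitz_on (cball y0 \<epsilon>) F"
    and flows: "\<And>T y. ode_sol F S T y \<Longrightarrow> Mnorm M (y 0 - c) \<le> \<delta> \<Longrightarrow>
        \<forall>t\<in>{0..T}. \<exists>D. ((\<lambda>s. Mnorm M (y s - c)) has_real_derivative D) (at t within {0..T})
                       \<and> D \<le> - \<rho> * Mnorm M (y t - c)"
    and y0: "Mnorm M (y0 - c) \<le> \<delta>"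
  shows "Minner M (y0 - c) (F y0) \<le> - \<rho> * (Mnorm M (y0 - c))\<^sup>2"
proof -
  define U where "U = {y. Mnorm M (y - c) < \<delta>}"
  have "open U" unfolding U_def by (intro open_Collect_less continuous_on_Mnorm continuous_intros)
  then have interior: "U \<subseteq> interior S" using ball by (intro interior_maximal) (auto simp: U_def MBall_def)
  have "closure U \<subseteq> MBall M c \<delta>"
    unfolding U_def MBall_def by (intro closure_minimal closed_Collect_le continuous_on_Mnorm continuous_intros) auto
  then have "continuous_on (closure U) (\<lambda>y. Minner M (y - c) (F y) + \<rho> * (Mnorm M (y - c))\<^sup>2)"
    using ball by (intro continuous_intros continuous_on_Minner continuous_on_Mnorm continuous_on_subset[OF contF])
      auto
  moreover have "y0 \<in> closure U" using MBall_subset_closure[OF M \<delta>] y0 by (auto simp: U_def MBall_def)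
  moreover have "Minner M (y - c) (F y) + \<rho> * (Mnorm M (y - c))\<^sup>2 \<le> 0" if "y \<in> U" for y
  proof -
    have "Minner M (y - c) (F y) \<le> - \<rho> * (Mnorm M (y - c))\<^sup>2"
      using M lipF flows subsetD[OF interior that] less_imp_le[OF that[unfolded U_def mem_Collect_eq]]
      by (rule Minner_le_of_norm_decreasing_flows)
    then show ?thesis by linarith
  qed
  ultimately have "Minner M (y0 - c) (F y0) + \<rho> * (Mnorm M (y0 - c))\<^sup>2 \<le> 0"
    by (rule continuous_le_on_closure)
  then show ?thesis by linarith
qed

lemma drift_dissipative:
  assumes JJ: "finite JJ"
    and r_deriv: "\<And>J y. J \<in> JJ \<Longrightarrow> y \<in> S \<Longrightarrow> (r J has_derivative (\<lambda>h. Dr J y \<bullet> h)) (at y within S)"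
    and r_C1: "\<And>J. J \<in> JJ \<Longrightarrow> continuous_on S (Dr J)"
    and M: "sym_posdef M" and \<delta>: "0 < \<delta>" and ball: "MBall M c \<delta> \<subseteq> S"
    and flows: "\<And>T y. ode_sol (drift JJ r) S T y \<Longrightarrow> Mnorm M (y 0 - c) \<le> \<delta> \<Longrightarrow>
        \<forall>t\<in>{0..T}. \<exists>D. ((\<lambda>s. Mnorm M (y s - c)) has_real_derivative D) (at t within {0..T})
                       \<and> D \<le> - \<rho> * Mnorm M (y t - c)"
    and y_ball: "y \<in> MBall M c \<delta>"
  shows "Minner M (y - c) (drift JJ r y) \<le> - \<rho> * (Mnorm M (y - c))\<^sup>2"
proof (rule Minner_le_on_MBall_of_norm_decreasing_flows[OF M \<delta> ball _ _ flows])
  show "continuous_on S (drift JJ r)"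
    using r_deriv by (intro continuous_on_drift has_derivative_continuous_on) blast
  show "\<exists>K. K-lipschitz_on (cball y0 \<epsilon>) (drift JJ r)" if "cball y0 \<epsilon> \<subseteq> S" for y0 \<epsilon>
  proof -
    have "\<exists>C. C-lipschitz_on (cball y0 \<epsilon>) (r J)" if "J \<in> JJ" for J
      using C1_lipschitz_on_compact_convex[OF r_deriv[OF that] r_C1[OF that], of "cball y0 \<epsilon>"]
        \<open>cball y0 \<epsilon> \<subseteq> S\<close> by (metis compact_cball convex_cball)
    then obtain C where "\<And>J. J \<in> JJ \<Longrightarrow> (C J)-lipschitz_on (cball y0 \<epsilon>) (r J)" by metis
    then show ?thesis using lipschitz_on_drift[OF JJ] by blast
  qed
  show "Mnorm M (y - c) \<le> \<delta>" using y_ball by (simp add: MBall_def)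
qed

section \<open>Exponential Lyapunov bounds for stationary distributions\<close>

lemma stationary_finite: "stationary XX q p \<Longrightarrow> finite XX"
  by (metis stationary_def sum.infinite zero_neq_one)

lemma stationary_sum_le_1: "stationary XX q p \<Longrightarrow> A \<subseteq> XX \<Longrightarrow> sum p A \<le> 1"
  unfolding stationary_def by (metis sum.infinite sum_mono2 zero_neq_one)

lemma stationary_generator_sum_eq_0:
  assumes st: "stationary XX q p" and fin: "finite XX"
  shows "(\<Sum>x\<in>XX. p x * (\<Sum>y\<in>XX - {x}. q x y * (V y - V x))) = 0"
proof -
  have bal: "p x * (\<Sum>y\<in>XX - {x}. q x y) = (\<Sum>y\<in>XX - {x}. p y * q y x)" if "x \<in> XX" for x
    using st that by (simp add: stationary_def)
  have "(\<Sum>x\<in>XX. \<Sum>y\<in>XX - {x}. p x * q x y * V y) = (\<Sum>y\<in>XX. \<Sum>x\<in>XX - {y}. p x * q x y * V y)"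
    using sum.swap_restrict[OF fin fin, of "\<lambda>x y. p x * q x y * V y" "\<lambda>x y. y \<noteq> x"]
    by (simp add: set_diff_eq eq_commute)
  also have "\<dots> = (\<Sum>y\<in>XX. V y * (p y * (\<Sum>x\<in>XX - {y}. q y x)))"
    using bal by (simp add: sum_distrib_left mult_ac)
  finally show ?thesis
    by (simp add: sum_distrib_left sum_subtractf right_diff_distrib mult_ac)
qed

lemma exp_mult_diff_ge:
  fixes \<theta> m u :: real
  assumes "0 < \<theta>" "0 \<le> m" "0 \<le> u"
  shows "- (exp (\<theta> * m) * m) \<le> exp (\<theta> * u) * (u - m)"
proof (cases "m \<le> u")
  case False
  then have "exp (\<theta> * u) * (m - u) \<le> exp (\<theta> * m) * m"
    using assms by (intro mult_mono) auto
  then show ?thesis by (simp add: algebra_simps)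
next
  case True
  then have "0 \<le> exp (\<theta> * u) * (u - m)" by simp
  moreover have "0 \<le> exp (\<theta> * m) * m" using assms by simp
  ultimately show ?thesis by linarith
qed

lemma stationary_drift_condition_sum_nonpos:
  assumes st: "stationary XX q p" and fin: "finite XX" and \<kappa>: "0 < \<kappa>"
    and drift: "\<And>x. x \<in> XX \<Longrightarrow> (\<Sum>y\<in>XX - {x}. q x y * (V y - V x)) \<le> \<kappa> * V x * (m - \<psi> x)"
  shows "(\<Sum>x\<in>XX. p x * V x * (\<psi> x - m)) \<le> 0"
proof -
  have "0 = (\<Sum>x\<in>XX. p x * (\<Sum>y\<in>XX - {x}. q x y * (V y - V x)))"
    using stationary_generator_sum_eq_0[OF st fin] by simp
  also have "\<dots> \<le> (\<Sum>x\<in>XX. p x * (\<kappa> * V x * (m - \<psi> x)))"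
    using drift st by (intro sum_mono mult_left_mono) (auto simp: stationary_def)
  also have "\<dots> = - \<kappa> * (\<Sum>x\<in>XX. p x * V x * (\<psi> x - m))"
    by (simp add: sum_distrib_left algebra_simps flip: sum_negf)
  finally show ?thesis using \<kappa> by (simp add: mult_le_0_iff)
qed

lemma stationary_exp_Lyapunov_tail:
  fixes p \<psi> :: "'a \<Rightarrow> real"
  assumes st: "stationary XX q p" and fin: "finite XX"
    and \<theta>: "0 < \<theta>" and \<kappa>: "0 < \<kappa>"
    and drift: "\<And>x. x \<in> XX \<Longrightarrow>
      (\<Sum>y\<in>XX - {x}. q x y * (exp (\<theta> * \<psi> y) - exp (\<theta> * \<psi> x))) \<le> \<kappa> * exp (\<theta> * \<psi> x) * (m - \<psi> x)"
    and \<psi>: "\<And>x. x \<in> XX \<Longrightarrow> 0 \<le> \<psi> x"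
    and a: "0 < a" and m: "0 \<le> m" "m \<le> a / 2"
  shows "(\<Sum>x\<in>{x\<in>XX. a < \<psi> x}. p x) \<le> exp (- \<theta> * a / 2)"
proof -
  define V where "V x = exp (\<theta> * \<psi> x)" for x
  define A where "A = {x\<in>XX. a < \<psi> x}"
  have p: "\<And>x. 0 \<le> p x" using st by (auto simp: stationary_def)
  have "sum p A * (exp (\<theta> * a) * (a / 2)) \<le> (\<Sum>x\<in>A. p x * V x * (\<psi> x - m))"
    unfolding sum_distrib_right using m a \<theta> p
    by (intro sum_mono) (auto simp: A_def V_def mult.assoc intro!: mult_left_mono mult_mono)
  moreover have "- (exp (\<theta> * m) * m) \<le> (\<Sum>x\<in>XX - A. p x * V x * (\<psi> x - m))"
  proof -
    have "sum p (XX - A) * (exp (\<theta> * m) * m) \<le> exp (\<theta> * m) * m"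
      using m p stationary_sum_le_1[OF st, of "XX - A"] by (intro mult_left_le_one_le) (auto intro: sum_nonneg)
    then have "- (exp (\<theta> * m) * m) \<le> sum p (XX - A) * - (exp (\<theta> * m) * m)" by simp
    also have "\<dots> \<le> (\<Sum>x\<in>XX - A. p x * V x * (\<psi> x - m))"
      unfolding sum_distrib_right
    proof (intro sum_mono)
      fix x assume "x \<in> XX - A"
      then have "p x * - (exp (\<theta> * m) * m) \<le> p x * (V x * (\<psi> x - m))"
        using exp_mult_diff_ge[OF \<theta> m(1) \<psi>[of x]] p[of x] by (intro mult_left_mono) (auto simp: V_def)
      then show "p x * - (exp (\<theta> * m) * m) \<le> p x * V x * (\<psi> x - m)" by (simp add: mult.assoc)
    qed
    finally show ?thesis .
  qed
  moreover have "(\<Sum>x\<in>XX. p x * V x * (\<psi> x - m))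
      = (\<Sum>x\<in>XX - A. p x * V x * (\<psi> x - m)) + (\<Sum>x\<in>A. p x * V x * (\<psi> x - m))"
    using fin by (intro sum.subset_diff) (auto simp: A_def)
  moreover have "exp (\<theta> * m) * m \<le> exp (\<theta> * (a / 2)) * (a / 2)"
    using m \<theta> by (intro mult_mono) auto
  ultimately have "sum p A * exp (\<theta> * a) * (a / 2) \<le> exp (\<theta> * (a / 2)) * (a / 2)"
    using stationary_drift_condition_sum_nonpos[OF st fin \<kappa> drift[folded V_def]] by (simp add: mult.assoc)
  then have "sum p A \<le> exp (\<theta> * (a / 2)) / exp (\<theta> * a)" using a by (simp add: field_simps)
  also have "\<dots> = exp (- \<theta> * a / 2)" by (simp flip: exp_diff)
  finally show ?thesis by (simp add: A_def)
qed

section \<open>The smoothed M-norm\<close>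

lemma exp_le_quadratic:
  fixes x :: real
  assumes "\<bar>x\<bar> \<le> 1"
  shows "exp x \<le> 1 + x + x\<^sup>2"
proof (cases "0 \<le> x")
  case False
  then have "exp x \<le> 1 / (1 - x)"
    using exp_ge_add_one_self[of "- x"] by (simp add: exp_minus field_simps)
  also have "\<dots> = 1 + x + x\<^sup>2 / (1 - x)"
    using False by (simp add: field_simps power2_eq_square)
  also have "x\<^sup>2 / (1 - x) \<le> x\<^sup>2"
    using False by (simp add: divide_le_eq mult_le_cancel_left1)
  finally show ?thesis by simp
qed (use assms exp_bound in simp)

lemma sqrt_le_arith_mean:
  fixes a b :: real
  assumes "0 < a" "0 \<le> b"
  shows "sqrt b \<le> (b + a\<^sup>2) / (2 * a)"
proof -
  have "0 \<le> (sqrt b - a)\<^sup>2" by simp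
  then have "2 * a * sqrt b \<le> b + a\<^sup>2"
    using assms by (simp add: power2_eq_square algebra_simps)
  then show ?thesis using assms by (simp add: field_simps)
qed

definition smooth_Mnorm :: "real^'d^'d \<Rightarrow> real \<Rightarrow> real^'d \<Rightarrow> real" where
  "smooth_Mnorm M s w = sqrt ((Mnorm M w)\<^sup>2 + s\<^sup>2)"

lemma smooth_Mnorm_power2: "(smooth_Mnorm M s w)\<^sup>2 = (Mnorm M w)\<^sup>2 + s\<^sup>2"
  by (simp add: smooth_Mnorm_def)

lemma smooth_Mnorm_pos: "0 < s \<Longrightarrow> 0 < smooth_Mnorm M s w"
  by (simp add: smooth_Mnorm_def add_nonneg_pos)

lemma smooth_Mnorm_ge: "s \<le> smooth_Mnorm M s w" "Mnorm M w \<le> smooth_Mnorm M s w"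
  by (simp_all add: smooth_Mnorm_def real_le_rsqrt)

lemma smooth_Mnorm_mono:
  "sym_posdef M \<Longrightarrow> Mnorm M v \<le> Mnorm M w \<Longrightarrow> smooth_Mnorm M s v \<le> smooth_Mnorm M s w"
  unfolding smooth_Mnorm_def by (simp add: Mnorm_nonneg power_mono)

lemma smooth_Mnorm_add_power2:
  "sym_posdef M \<Longrightarrow>
    (smooth_Mnorm M s (v + u))\<^sup>2 = (smooth_Mnorm M s v)\<^sup>2 + (2 * Minner M v u + (Mnorm M u)\<^sup>2)"
  by (simp add: smooth_Mnorm_power2 Mnorm_add_power2)

lemma smooth_Mnorm_add_le:
  assumes M: "sym_posdef M" and s: "0 < s"
  shows "smooth_Mnorm M s (v + u)
    \<le> smooth_Mnorm M s v + (2 * Minner M v u + (Mnorm M u)\<^sup>2) / (2 * smooth_Mnorm M s v)"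
proof -
  have "smooth_Mnorm M s (v + u) = sqrt ((smooth_Mnorm M s (v + u))\<^sup>2)"
    using smooth_Mnorm_pos[OF s, of M "v + u"] by simp
  also have "\<dots> \<le> ((smooth_Mnorm M s (v + u))\<^sup>2 + (smooth_Mnorm M s v)\<^sup>2) / (2 * smooth_Mnorm M s v)"
    by (intro sqrt_le_arith_mean smooth_Mnorm_pos[OF s]) simp
  also have "\<dots> = (2 * (smooth_Mnorm M s v)\<^sup>2 + (2 * Minner M v u + (Mnorm M u)\<^sup>2))
      / (2 * smooth_Mnorm M s v)"
    by (simp add: smooth_Mnorm_add_power2[OF M])
  also have "\<dots> = smooth_Mnorm M s v + (2 * Minner M v u + (Mnorm M u)\<^sup>2) / (2 * smooth_Mnorm M s v)"
    using smooth_Mnorm_pos[OF s, of M v] by (simp add: power2_eq_square add_divide_distrib)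
  finally show ?thesis .
qed

lemma abs_smooth_Mnorm_add_diff_le:
  assumes M: "sym_posdef M" and s: "0 < s"
  shows "\<bar>smooth_Mnorm M s (v + u) - smooth_Mnorm M s v\<bar> \<le> Mnorm M u"
proof -
  define a b k where "a = smooth_Mnorm M s v" "b = smooth_Mnorm M s (v + u)" "k = Mnorm M u"
  have nonneg: "0 \<le> a" "0 \<le> b" "0 \<le> k"
    using smooth_Mnorm_pos[OF s, of M v] smooth_Mnorm_pos[OF s, of M "v + u"] Mnorm_nonneg[OF M, of u]
    by (simp_all add: a_b_k_def)
  have "\<bar>Minner M v u\<bar> \<le> a * k"
    using abs_Minner_le_Mnorm[OF M, of v u] smooth_Mnorm_ge(2)[of M v s] nonneg
    by (auto simp: a_b_k_def intro: order_trans mult_right_mono)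
  then have "(a - k)\<^sup>2 \<le> b\<^sup>2" "b\<^sup>2 \<le> (a + k)\<^sup>2"
    using smooth_Mnorm_add_power2[OF M, of s v u]
    by (auto simp: a_b_k_def power2_eq_square algebra_simps)
  then have "\<bar>a - k\<bar> \<le> b" "b \<le> a + k"
    using nonneg by (auto simp flip: abs_le_square_iff)
  then show ?thesis by (simp add: a_b_k_def)
qed

lemma exp_smooth_Mnorm_add_le:
  assumes M: "sym_posdef M" and s: "0 < s" and \<theta>: "0 < \<theta>"
    and K: "Mnorm M u \<le> K" "\<theta> * K \<le> 1"
  shows "exp (\<theta> * smooth_Mnorm M s (v + u)) - exp (\<theta> * smooth_Mnorm M s v)
    \<le> exp (\<theta> * smooth_Mnorm M s v)
      * (\<theta> * ((2 * Minner M v u + K\<^sup>2) / (2 * smooth_Mnorm M s v)) + \<theta>\<^sup>2 * K\<^sup>2)"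
proof -
  define \<Delta> where "\<Delta> = smooth_Mnorm M s (v + u) - smooth_Mnorm M s v"
  have \<Delta>: "\<bar>\<Delta>\<bar> \<le> K" using abs_smooth_Mnorm_add_diff_le[OF M s, of v u] K(1) by (simp add: \<Delta>_def)
  have "\<bar>\<theta> * \<Delta>\<bar> = \<theta> * \<bar>\<Delta>\<bar>" using \<theta> by (simp add: abs_mult)
  also have "\<dots> \<le> \<theta> * K" using \<Delta> \<theta> by (intro mult_left_mono) auto
  finally have "\<bar>\<theta> * \<Delta>\<bar> \<le> 1" using K(2) by linarith
  then have "exp (\<theta> * \<Delta>) \<le> 1 + \<theta> * \<Delta> + (\<theta> * \<Delta>)\<^sup>2" by (rule exp_le_quadratic)
  also have "(\<theta> * \<Delta>)\<^sup>2 \<le> \<theta>\<^sup>2 * K\<^sup>2"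
    using \<Delta> by (simp add: power_mult_distrib abs_le_square_iff[symmetric] mult_left_mono)
  also have "\<Delta> \<le> (2 * Minner M v u + (Mnorm M u)\<^sup>2) / (2 * smooth_Mnorm M s v)"
    using smooth_Mnorm_add_le[OF M s, of v u] by (simp add: \<Delta>_def)
  also have "\<dots> \<le> (2 * Minner M v u + K\<^sup>2) / (2 * smooth_Mnorm M s v)"
    using K(1) Mnorm_nonneg[OF M, of u] smooth_Mnorm_pos[OF s, of M v]
    by (intro divide_right_mono add_left_mono power_mono) auto
  finally have "exp (\<theta> * \<Delta>) - 1
      \<le> \<theta> * ((2 * Minner M v u + K\<^sup>2) / (2 * smooth_Mnorm M s v)) + \<theta>\<^sup>2 * K\<^sup>2"
    using \<theta> by (simp add: mult_left_mono)
  moreover have "exp (\<theta> * smooth_Mnorm M s (v + u)) - exp (\<theta> * smooth_Mnorm M s v)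
      = exp (\<theta> * smooth_Mnorm M s v) * (exp (\<theta> * \<Delta>) - 1)"
    by (simp add: \<Delta>_def algebra_simps flip: exp_add)
  ultimately show ?thesis by (simp add: mult_left_mono)
qed

lemma sum_jumps_exp_smooth_Mnorm_le:
  fixes M :: "real^'d^'d" and s :: real and w :: "int^'d \<Rightarrow> real" and v :: "real^'d"
  defines "\<psi> \<equiv> smooth_Mnorm M s"
  assumes M: "sym_posdef M" and s: "0 < s" and \<theta>: "0 < \<theta>" and \<rho>: "0 < \<rho>"
    and w: "\<And>J. J \<in> JJ \<Longrightarrow> 0 \<le> w J" and W: "(\<Sum>J\<in>JJ. w J) \<le> W"
    and K: "\<And>J. J \<in> JJ \<Longrightarrow> Mnorm M (rvec J) \<le> K" "\<theta> * K \<le> 1"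
    and dissip: "Minner M v (\<Sum>J\<in>JJ. w J *\<^sub>R rvec J) \<le> - \<rho> * (Mnorm M v)\<^sup>2"
    and s_eq: "K\<^sup>2 * W = 2 * \<rho> * s\<^sup>2"
  shows "(\<Sum>J\<in>JJ. w J * (exp (\<theta> * \<psi> (v + rvec J)) - exp (\<theta> * \<psi> v)))
    \<le> \<theta> * \<rho> * exp (\<theta> * \<psi> v) * (2 * s + \<theta> * K\<^sup>2 * W / \<rho> - \<psi> v)"
proof -
  define P E where "P = \<psi> v" "E = exp (\<theta> * \<psi> v)"
  have P: "0 < P" "s \<le> P" "P\<^sup>2 = (Mnorm M v)\<^sup>2 + s\<^sup>2"
    using smooth_Mnorm_pos[OF s] smooth_Mnorm_ge(1) smooth_Mnorm_power2 by (auto simp: P_E_def \<psi>_def)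
  have E: "0 < E" by (simp add: P_E_def)
  define B where "B = (\<Sum>J\<in>JJ. w J * Minner M v (rvec J))"
  define Sw where "Sw = (\<Sum>J\<in>JJ. w J)"
  have "(\<Sum>J\<in>JJ. w J * (exp (\<theta> * \<psi> (v + rvec J)) - exp (\<theta> * \<psi> v)))
      \<le> (\<Sum>J\<in>JJ. w J * (E * (\<theta> * ((2 * Minner M v (rvec J) + K\<^sup>2) / (2 * P)) + \<theta>\<^sup>2 * K\<^sup>2)))"
    using exp_smooth_Mnorm_add_le[OF M s \<theta> K(1) K(2)] w unfolding P_E_def \<psi>_def
    by (intro sum_mono mult_left_mono) auto
  also have "\<dots> = (\<Sum>J\<in>JJ. (E * \<theta> / P) * (w J * Minner M v (rvec J))
      + (E * \<theta> * K\<^sup>2 / (2 * P) + E * \<theta>\<^sup>2 * K\<^sup>2) * w J)"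
    using P(1) by (intro sum.cong refl) (simp add: field_simps)
  also have "\<dots> = (E * \<theta> / P) * B + (E * \<theta> * K\<^sup>2 / (2 * P) + E * \<theta>\<^sup>2 * K\<^sup>2) * Sw"
    by (simp add: B_def Sw_def sum.distrib sum_distrib_left)
  also have "\<dots> = E * \<theta> * ((2 * B + K\<^sup>2 * Sw) / (2 * P)) + E * \<theta>\<^sup>2 * K\<^sup>2 * Sw"
    using P(1) by (simp add: field_simps)
  also have "\<dots> \<le> E * \<theta> * (- \<rho> * P + 2 * \<rho> * s) + E * \<theta>\<^sup>2 * K\<^sup>2 * W"
  proof (intro add_mono mult_left_mono)
    have "B = Minner M v (\<Sum>J\<in>JJ. w J *\<^sub>R rvec J)"
      by (simp add: B_def Minner_sum_right Minner_scaleR_right)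
    then have "2 * B + K\<^sup>2 * Sw \<le> - 2 * \<rho> * (P\<^sup>2 - s\<^sup>2) + 2 * \<rho> * s\<^sup>2"
      using dissip W P(3) s_eq mult_left_mono[of Sw W "K\<^sup>2"] by (simp add: Sw_def)
    then have "(2 * B + K\<^sup>2 * Sw) / (2 * P) \<le> (- 2 * \<rho> * P\<^sup>2 + 4 * \<rho> * s\<^sup>2) / (2 * P)"
      using P(1) by (intro divide_right_mono) (auto simp: algebra_simps)
    also have "\<dots> = - \<rho> * P + 2 * \<rho> * (s\<^sup>2 / P)"
      using P(1) by (simp add: field_simps power2_eq_square)
    also have "\<dots> \<le> - \<rho> * P + 2 * \<rho> * s"
      using P \<rho> s by (simp add: power2_eq_square divide_le_eq mult_left_mono)
    finally show "(2 * B + K\<^sup>2 * Sw) / (2 * P) \<le> - \<rho> * P + 2 * \<rho> * s" .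
    show "Sw \<le> W" using W by (simp add: Sw_def)
  qed (use E \<theta> in auto)
  also have "\<dots> = \<theta> * \<rho> * E * (2 * s + \<theta> * K\<^sup>2 * W / \<rho> - P)"
    using \<rho> by (simp add: field_simps power2_eq_square)
  finally show ?thesis by (simp add: P_E_def)
qed

section \<open>The truncated chain\<close>

lemma rvec_add: "rvec (x + y) = rvec x + rvec y"
  by (simp add: rvec_def vec_eq_iff)

lemma trunc_generator_eq_sum_jumps:
  assumes fin: "finite XX" "finite JJ" and x: "x \<in> XX"
  shows "(\<Sum>y\<in>XX - {x}. trunc_rate JJ r N XX x y * (V y - V x))
    = (\<Sum>J\<in>JJ. if x + J \<in> XX - {x} then real N * r J ((1 / real N) *\<^sub>R rvec x) * (V (x + J) - V x) else 0)"
proof -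
  define g where "g J = real N * r J ((1 / real N) *\<^sub>R rvec x)" for J
  have "(\<Sum>y\<in>XX - {x}. trunc_rate JJ r N XX x y * (V y - V x))
      = (\<Sum>y\<in>XX - {x}. \<Sum>J\<in>JJ. if x + J = y then g J * (V (x + J) - V x) else 0)"
  proof (rule sum.cong[OF refl])
    fix y assume y: "y \<in> XX - {x}"
    have "trunc_rate JJ r N XX x y = (\<Sum>J\<in>JJ. if x + J = y then g J else 0)"
      unfolding g_def using x y fin(2) by (simp add: trunc_rate_def sum.inter_filter)
    then show "trunc_rate JJ r N XX x y * (V y - V x)
        = (\<Sum>J\<in>JJ. if x + J = y then g J * (V (x + J) - V x) else 0)"
      by (auto simp: sum_distrib_right intro!: sum.cong)
  qed
  also have "\<dots> = (\<Sum>J\<in>JJ. \<Sum>y\<in>XX - {x}. if x + J = y then g J * (V (x + J) - V x) else 0)"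
    by (rule sum.swap)
  also have "\<dots> = (\<Sum>J\<in>JJ. if x + J \<in> XX - {x} then g J * (V (x + J) - V x) else 0)"
    using fin(1) by (simp add: sum.delta')
  finally show ?thesis by (simp only: g_def)
qed

lemma trunc_generator_le_sum_jumps:
  assumes fin: "finite XX" "finite JJ" and x: "x \<in> XX"
    and rates: "\<And>J. J \<in> JJ \<Longrightarrow> 0 \<le> r J ((1 / real N) *\<^sub>R rvec x)"
    and exits: "\<And>J. J \<in> JJ \<Longrightarrow> x + J \<notin> XX \<Longrightarrow> 0 < r J ((1 / real N) *\<^sub>R rvec x) \<Longrightarrow> V x \<le> V (x + J)"
  shows "(\<Sum>y\<in>XX - {x}. trunc_rate JJ r N XX x y * (V y - V x))
    \<le> (\<Sum>J\<in>JJ. real N * r J ((1 / real N) *\<^sub>R rvec x) * (V (x + J) - V x))"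
  unfolding trunc_generator_eq_sum_jumps[OF fin x]
proof (intro sum_mono)
  fix J assume J: "J \<in> JJ"
  show "(if x + J \<in> XX - {x} then real N * r J ((1 / real N) *\<^sub>R rvec x) * (V (x + J) - V x) else 0)
      \<le> real N * r J ((1 / real N) *\<^sub>R rvec x) * (V (x + J) - V x)"
    using rates[OF J] exits[OF J] x by (cases "0 < r J ((1 / real N) *\<^sub>R rvec x)") auto
qed

lemma trunc_generator_exp_smooth_Mnorm_le:
  fixes N :: nat and x :: "int^'d" and M :: "real^'d^'d" and s :: real and c :: "real^'d"
  defines "y \<equiv> (1 / real N) *\<^sub>R rvec x"
    and "\<psi> \<equiv> \<lambda>X. smooth_Mnorm M s (rvec X - real N *\<^sub>R c)"
  assumes M: "sym_posdef M" and N: "0 < N" and fin: "finite XX" "finite JJ" and x: "x \<in> XX"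
    and s: "0 < s" and \<theta>: "0 < \<theta>" and \<rho>: "0 < \<rho>"
    and rates: "\<And>J. J \<in> JJ \<Longrightarrow> 0 \<le> r J y" and total: "(\<Sum>J\<in>JJ. r J y) \<le> R"
    and exits: "\<And>J. J \<in> JJ \<Longrightarrow> x + J \<notin> XX \<Longrightarrow> 0 < r J y \<Longrightarrow>
      Mnorm M (rvec x - real N *\<^sub>R c) \<le> Mnorm M (rvec (x + J) - real N *\<^sub>R c)"
    and K: "\<And>J. J \<in> JJ \<Longrightarrow> Mnorm M (rvec J) \<le> K" "\<theta> * K \<le> 1"
    and dissip: "Minner M (y - c) (drift JJ r y) \<le> - \<rho> * (Mnorm M (y - c))\<^sup>2"
    and s_eq: "real N * K\<^sup>2 * R = 2 * \<rho> * s\<^sup>2"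
  shows "(\<Sum>z\<in>XX - {x}. trunc_rate JJ r N XX x z * (exp (\<theta> * \<psi> z) - exp (\<theta> * \<psi> x)))
    \<le> \<theta> * \<rho> * exp (\<theta> * \<psi> x) * (2 * s + \<theta> * K\<^sup>2 * (real N * R) / \<rho> - \<psi> x)"
proof -
  define v where "v = rvec x - real N *\<^sub>R c"
  have v: "v = real N *\<^sub>R (y - c)" using N by (simp add: v_def y_def scaleR_diff_right)
  have \<psi>_x: "\<psi> x = smooth_Mnorm M s v" by (simp add: \<psi>_def v_def)
  have \<psi>_jump: "\<psi> (x + J) = smooth_Mnorm M s (v + rvec J)" for J
    by (simp add: \<psi>_def v_def rvec_add algebra_simps)
  have "(\<Sum>z\<in>XX - {x}. trunc_rate JJ r N XX x z * (exp (\<theta> * \<psi> z) - exp (\<theta> * \<psi> x)))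
      \<le> (\<Sum>J\<in>JJ. (real N * r J y) * (exp (\<theta> * \<psi> (x + J)) - exp (\<theta> * \<psi> x)))"
    unfolding y_def using \<theta> rates exits
    by (intro trunc_generator_le_sum_jumps[OF fin x]) (auto simp: y_def \<psi>_def intro!: smooth_Mnorm_mono[OF M])
  also have "\<dots> \<le> \<theta> * \<rho> * exp (\<theta> * \<psi> x) * (2 * s + \<theta> * K\<^sup>2 * (real N * R) / \<rho> - \<psi> x)"
    unfolding \<psi>_jump \<psi>_x
  proof (rule sum_jumps_exp_smooth_Mnorm_le[OF M s \<theta> \<rho> _ _ K])
    show "0 \<le> real N * r J y" if "J \<in> JJ" for J using rates[OF that] by simp
    show "(\<Sum>J\<in>JJ. real N * r J y) \<le> real N * R" using total N by (simp flip: sum_distrib_left)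
    have "Minner M v (\<Sum>J\<in>JJ. (real N * r J y) *\<^sub>R rvec J) = (real N)\<^sup>2 * Minner M (y - c) (drift JJ r y)"
      by (simp add: v drift_def Minner_scaleR_left power2_eq_square flip: scaleR_scaleR scaleR_sum_right
          Minner_scaleR_right)
    also have "\<dots> \<le> (real N)\<^sup>2 * (- \<rho> * (Mnorm M (y - c))\<^sup>2)" using dissip by (intro mult_left_mono) auto
    also have "\<dots> = - \<rho> * (Mnorm M v)\<^sup>2" by (simp add: v Mnorm_scaleR[OF M] power_mult_distrib)
    finally show "Minner M v (\<Sum>J\<in>JJ. (real N * r J y) *\<^sub>R rvec J) \<le> - \<rho> * (Mnorm M v)\<^sup>2" .
    show "K\<^sup>2 * (real N * R) = 2 * \<rho> * s\<^sup>2" using s_eq by (simp add: mult_ac)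
  qed
  finally show ?thesis .
qed

lemma Mnorm_scaled_le_iff:
  assumes "sym_posdef M" "0 < N"
  shows "Mnorm M (rvec x - real N *\<^sub>R c) \<le> real N * \<delta> \<longleftrightarrow> (1 / real N) *\<^sub>R rvec x \<in> MBall M c \<delta>"
proof -
  have "rvec x - real N *\<^sub>R c = real N *\<^sub>R ((1 / real N) *\<^sub>R rvec x - c)"
    using assms(2) by (simp add: scaleR_diff_right)
  then show ?thesis using assms by (simp add: MBall_def Mnorm_scaleR)
qed

text \<open>theta <= 1/K keeps the exponent increments of a single jump in [-1, 1], where
  exp_le_quadratic applies; s balances the second-order jump terms against the drift,
  and theta <= rho z / (4 K^2 R) keeps the level of the drift condition below N z / 2.\<close>

lemma Lyapunov_parameters:
  fixes N :: nat and K R \<rho> z :: real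
  defines "\<theta> \<equiv> min (1 / K) (\<rho> * z / (4 * K\<^sup>2 * R))" and "s \<equiv> sqrt (real N * R * K\<^sup>2 / (2 * \<rho>))"
  assumes N: "0 < N" and K: "0 < K" and R: "0 < R" and \<rho>: "0 < \<rho>" and z: "0 < z"
    and large: "32 * R * K\<^sup>2 \<le> real N * z\<^sup>2 * \<rho>"
  shows "0 < \<theta>" "\<theta> * K \<le> 1" "0 < s" "real N * K\<^sup>2 * R = 2 * \<rho> * s\<^sup>2"
    and "2 * s + \<theta> * K\<^sup>2 * (real N * R) / \<rho> \<le> real N * z / 2"
    and "\<theta> * (real N * z) / 2 = min (real N * z / (2 * K)) (real N * z\<^sup>2 * \<rho> / (8 * K\<^sup>2 * R))"
proof -
  show \<theta>: "0 < \<theta>" "\<theta> * K \<le> 1" using K \<rho> z R by (auto simp: \<theta>_def min_def field_simps)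
  show s: "0 < s" "real N * K\<^sup>2 * R = 2 * \<rho> * s\<^sup>2" using N R K \<rho> by (auto simp: s_def)
  have "\<rho> * (8 * s)\<^sup>2 = 32 * (2 * \<rho> * s\<^sup>2)" by (simp add: power_mult_distrib algebra_simps)
  also have "\<dots> = (32 * R * K\<^sup>2) * real N" using s(2) by (simp add: algebra_simps)
  also have "\<dots> \<le> (real N * z\<^sup>2 * \<rho>) * real N" using large by (intro mult_right_mono) auto
  also have "\<dots> = \<rho> * (real N * z)\<^sup>2" by (simp add: power2_eq_square algebra_simps)
  finally have "(8 * s)\<^sup>2 \<le> (real N * z)\<^sup>2" using \<rho> by simp
  then have "8 * s \<le> real N * z" by (rule power2_le_imp_le) (use N z in simp)
  moreover have "\<theta> * K\<^sup>2 * (real N * R) / \<rho> \<le> (\<rho> * z / (4 * K\<^sup>2 * R)) * K\<^sup>2 * (real N * R) / \<rho>"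
    using K R \<rho> by (intro divide_right_mono mult_right_mono) (auto simp: \<theta>_def)
  moreover have "(\<rho> * z / (4 * K\<^sup>2 * R)) * K\<^sup>2 * (real N * R) / \<rho> = real N * z / 4"
    using K R \<rho> by (simp add: field_simps)
  ultimately show "2 * s + \<theta> * K\<^sup>2 * (real N * R) / \<rho> \<le> real N * z / 2" by linarith
  have "1 / K * (real N * z / 2) = real N * z / (2 * K)"
    and "\<rho> * z / (4 * K\<^sup>2 * R) * (real N * z / 2) = real N * z\<^sup>2 * \<rho> / (8 * K\<^sup>2 * R)"
    by (simp_all add: power2_eq_square mult_ac)
  moreover have "\<theta> * (real N * z) / 2 = min (1 / K) (\<rho> * z / (4 * K\<^sup>2 * R)) * (real N * z / 2)"
    by (simp add: \<theta>_def)
  ultimately show "\<theta> * (real N * z) / 2 = min (real N * z / (2 * K)) (real N * z\<^sup>2 * \<rho> / (8 * K\<^sup>2 * R))"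
    using N z by (simp only: min_mult_distrib_right) simp
qed

lemma trunc_stationary_tail_le:
  fixes N :: nat and S :: "nat \<Rightarrow> (int^'d) set" and M :: "real^'d^'d" and c :: "real^'d" and \<delta> :: real
  defines "XX \<equiv> {X \<in> S N. Mnorm M (rvec X - real N *\<^sub>R c) \<le> real N * \<delta>}"
  assumes M: "sym_posdef M" and N: "0 < N" and JJ: "finite JJ"
    and jumps: "\<And>x J. x \<in> S N \<Longrightarrow> J \<in> JJ \<Longrightarrow> 0 < r J ((1 / real N) *\<^sub>R rvec x) \<Longrightarrow> x + J \<in> S N"
    and st: "stationary XX (trunc_rate JJ r N XX) \<pi>"
    and rates: "\<And>J y. J \<in> JJ \<Longrightarrow> y \<in> MBall M c \<delta> \<Longrightarrow> 0 \<le> r J y"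
    and total: "\<And>y. y \<in> MBall M c \<delta> \<Longrightarrow> (\<Sum>J\<in>JJ. r J y) \<le> R"
    and dissip: "\<And>y. y \<in> MBall M c \<delta> \<Longrightarrow> Minner M (y - c) (drift JJ r y) \<le> - \<rho> * (Mnorm M (y - c))\<^sup>2"
    and K: "\<And>J. J \<in> JJ \<Longrightarrow> Mnorm M (rvec J) \<le> K" "0 < K"
    and R: "0 < R" and \<rho>: "0 < \<rho>" and z: "0 < z"
    and large: "32 * R * K\<^sup>2 \<le> real N * z\<^sup>2 * \<rho>"
  shows "(\<Sum>X\<in>{X \<in> S N. Mnorm M (rvec X - real N *\<^sub>R c) \<le> real N * \<delta>
      \<and> Mnorm M (rvec X - real N *\<^sub>R c) > real N * z}. \<pi> X)
    \<le> exp (- min (real N * z / (2 * K)) (real N * z\<^sup>2 * \<rho> / (8 * K\<^sup>2 * R)))"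
proof -
  define \<theta> where "\<theta> = min (1 / K) (\<rho> * z / (4 * K\<^sup>2 * R))"
  define s where "s = sqrt (real N * R * K\<^sup>2 / (2 * \<rho>))"
  define \<psi> where "\<psi> x = smooth_Mnorm M s (rvec x - real N *\<^sub>R c)" for x
  note par = Lyapunov_parameters[OF N K(2) R \<rho> z large, folded \<theta>_def s_def]
  have fin: "finite XX" using stationary_finite[OF st] .
  have ball: "(1 / real N) *\<^sub>R rvec x \<in> MBall M c \<delta>" if "x \<in> XX" for x
    using that Mnorm_scaled_le_iff[OF M N] by (simp add: XX_def)
  have "(\<Sum>x\<in>{x\<in>XX. real N * z < \<psi> x}. \<pi> x) \<le> exp (- \<theta> * (real N * z) / 2)"
  proof (rule stationary_exp_Lyapunov_tail[OF st fin par(1) _ _ _ _ _ par(5)])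
    show "0 < \<theta> * \<rho>" using par(1) \<rho> by simp
    show "(\<Sum>y\<in>XX - {x}. trunc_rate JJ r N XX x y * (exp (\<theta> * \<psi> y) - exp (\<theta> * \<psi> x)))
        \<le> \<theta> * \<rho> * exp (\<theta> * \<psi> x) * (2 * s + \<theta> * K\<^sup>2 * (real N * R) / \<rho> - \<psi> x)"
      if x: "x \<in> XX" for x
      unfolding \<psi>_def
    proof (rule trunc_generator_exp_smooth_Mnorm_le[OF M N fin JJ x par(3,1) \<rho> _ total[OF ball[OF x]] _ K(1)
          par(2) dissip[OF ball[OF x]] par(4)])
      show "0 \<le> r J ((1 / real N) *\<^sub>R rvec x)" if "J \<in> JJ" for J using rates[OF that ball[OF x]] .
      show "Mnorm M (rvec x - real N *\<^sub>R c) \<le> Mnorm M (rvec (x + J) - real N *\<^sub>R c)"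
        if "J \<in> JJ" "x + J \<notin> XX" "0 < r J ((1 / real N) *\<^sub>R rvec x)" for J
        using x that jumps[of x J] by (force simp: XX_def)
    qed
    show "0 \<le> \<psi> x" for x
      using smooth_Mnorm_pos[OF par(3), of M "rvec x - real N *\<^sub>R c"] by (simp add: \<psi>_def)
    show "0 < real N * z" "0 \<le> 2 * s + \<theta> * K\<^sup>2 * (real N * R) / \<rho>"
      using N z par(1,3) R \<rho> by simp_all
  qed
  moreover have "(\<Sum>X\<in>{X \<in> S N. Mnorm M (rvec X - real N *\<^sub>R c) \<le> real N * \<delta>
      \<and> Mnorm M (rvec X - real N *\<^sub>R c) > real N * z}. \<pi> X) \<le> (\<Sum>x\<in>{x\<in>XX. real N * z < \<psi> x}. \<pi> x)"
  proof (rule sum_mono2)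
    show "finite {x\<in>XX. real N * z < \<psi> x}" using fin by simp
    show "{X \<in> S N. Mnorm M (rvec X - real N *\<^sub>R c) \<le> real N * \<delta>
        \<and> Mnorm M (rvec X - real N *\<^sub>R c) > real N * z} \<subseteq> {x\<in>XX. real N * z < \<psi> x}"
      using smooth_Mnorm_ge(2)[of M _ s] by (auto simp: XX_def \<psi>_def intro: less_le_trans)
  qed (use st in \<open>simp add: stationary_def\<close>)
  ultimately show ?thesis using par(6) by simp
qed

section \<open>The constants of the bound\<close>

lemma zeta_argument_bounds:
  fixes C z \<rho> L :: real
  assumes C: "0 < C" and z: "0 < z" and \<rho>: "0 < \<rho>" and L: "0 \<le> L"
  shows "0 \<le> z * (1 - exp (- 1 / 2)) / (2 * C) * exp (- L / \<rho>)"
    and "z * (1 - exp (- 1 / 2)) / (2 * C) * exp (- L / \<rho>) \<le> z / (4 * C)"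
proof -
  have e: "1 / 2 \<le> exp (- 1 / 2 :: real)" "exp (- 1 / 2 :: real) \<le> 1"
    using exp_ge_add_one_self[of "- 1 / 2 :: real"] by auto
  have eL: "exp (- L / \<rho>) \<le> 1" using L \<rho> by auto
  show "0 \<le> z * (1 - exp (- 1 / 2)) / (2 * C) * exp (- L / \<rho>)" using z C e(2) by simp
  have "z * (1 - exp (- 1 / 2)) / (2 * C) * exp (- L / \<rho>) \<le> z * (1 - exp (- 1 / 2)) / (2 * C)"
    using e eL z C by (intro mult_left_le) auto
  also have "\<dots> \<le> z * (1 / 2) / (2 * C)" using e z C by (intro divide_right_mono mult_left_mono) auto
  finally show "z * (1 - exp (- 1 / 2)) / (2 * C) * exp (- L / \<rho>) \<le> z / (4 * C)" by simp
qed

lemma two_zeta_eq_exp: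
  fixes d N :: nat
  assumes d: "0 < d" and C: "0 < C" and Js: "0 < Js" and R: "0 < R" and \<rho>: "0 < \<rho>" and z: "0 < z"
    and L: "0 \<le> L"
  obtains E where "2 * zeta d N (1 / \<rho>) R Js (z * (1 - exp (- 1 / 2)) / (2 * C) * exp (- L / \<rho>))
      = 4 * real d * exp (- E)"
    and "E \<le> real N * z / (8 * (C * Js))" "E \<le> real N * z\<^sup>2 * \<rho> / (32 * (C * Js)\<^sup>2 * R)"
proof -
  define K where "K = C * Js"
  define w where "w = z * (1 - exp (- 1 / 2)) / (2 * C) * exp (- L / \<rho>)"
  define X1 where "X1 = real N * w / (2 * real d * Js)"
  define X2 where "X2 = w / (real d * exp 1 * (1 / \<rho>) * R * Js)"
  have K: "0 < K" using C Js by (simp add: K_def)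
  have d1: "1 \<le> real d" using d by simp
  have w: "0 \<le> w" "w \<le> z / (4 * C)" using zeta_argument_bounds[OF C z \<rho> L] by (simp_all add: w_def)
  have X1: "0 \<le> X1" "X1 \<le> real N * z / (8 * K)"
  proof -
    show "0 \<le> X1" using w Js d by (simp add: X1_def)
    have "X1 \<le> real N * w / (2 * Js)" unfolding X1_def using d1 Js w by (intro divide_left_mono) auto
    also have "\<dots> \<le> real N * (z / (4 * C)) / (2 * Js)"
      using w Js by (intro divide_right_mono mult_left_mono) auto
    finally show "X1 \<le> real N * z / (8 * K)" by (simp add: K_def)
  qed
  have X2: "0 \<le> X2" "X2 \<le> z * \<rho> / (4 * K * R)"
  proof -
    show "0 \<le> X2" using w Js R \<rho> d by (simp add: X2_def)
    have "X2 = w * \<rho> / (real d * exp 1 * R * Js)" using \<rho> by (simp add: X2_def)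
    also have "\<dots> \<le> w * \<rho> / (1 * 1 * R * Js)"
      using d1 Js R w \<rho> by (intro divide_left_mono mult_right_mono mult_mono) auto
    also have "\<dots> \<le> (z / (4 * C)) * \<rho> / (1 * 1 * R * Js)"
      using w Js R \<rho> by (intro divide_right_mono mult_right_mono) auto
    finally show "X2 \<le> z * \<rho> / (4 * K * R)" by (simp add: K_def mult_ac)
  qed
  have "X1 * min 1 X2 \<le> X1" using mult_left_le[of "min 1 X2" X1] X1(1) by simp
  then have E1: "X1 * min 1 X2 \<le> real N * z / (8 * K)" using X1(2) by linarith
  have E2: "X1 * min 1 X2 \<le> real N * z\<^sup>2 * \<rho> / (32 * K\<^sup>2 * R)"
  proof -
    have "X1 * min 1 X2 \<le> X1 * X2" using X1 by (simp add: mult_left_mono)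
    also have "\<dots> \<le> (real N * z / (8 * K)) * (z * \<rho> / (4 * K * R))"
      using X1 X2 z \<rho> K R by (intro mult_mono) auto
    also have "\<dots> = real N * z\<^sup>2 * \<rho> / (32 * K\<^sup>2 * R)" by (simp add: power2_eq_square field_simps)
    finally show ?thesis .
  qed
  have "2 * zeta d N (1 / \<rho>) R Js (z * (1 - exp (- 1 / 2)) / (2 * C) * exp (- L / \<rho>))
      = 4 * real d * exp (- (X1 * min 1 X2))"
    by (simp add: zeta_def X1_def X2_def w_def)
  then show ?thesis by (rule that) (use E1 E2 in \<open>simp_all add: K_def\<close>)
qed

lemma tail_le_two_zeta:
  fixes d N :: nat
  assumes d: "0 < d" and C: "0 < C" and Js: "0 < Js" and R: "0 < R" and \<rho>: "0 < \<rho>" and z: "0 < z"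
    and L: "0 \<le> L" and p: "p \<le> 1"
    and tail: "32 * R * (C * Js)\<^sup>2 \<le> real N * z\<^sup>2 * \<rho> \<Longrightarrow>
      p \<le> exp (- min (real N * z / (2 * (C * Js))) (real N * z\<^sup>2 * \<rho> / (8 * (C * Js)\<^sup>2 * R)))"
  shows "p \<le> 2 * zeta d N (1 / \<rho>) R Js (z * (1 - exp (- 1 / 2)) / (2 * C) * exp (- L / \<rho>))"
proof -
  define K where "K = C * Js"
  have K: "0 < K" using C Js by (simp add: K_def)
  have d1: "1 \<le> real d" using d by simp
  obtain E where zeta: "2 * zeta d N (1 / \<rho>) R Js (z * (1 - exp (- 1 / 2)) / (2 * C) * exp (- L / \<rho>))
      = 4 * real d * exp (- E)"
    and E1: "E \<le> real N * z / (8 * K)" and E2: "E \<le> real N * z\<^sup>2 * \<rho> / (32 * K\<^sup>2 * R)"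
    using two_zeta_eq_exp[OF d C Js R \<rho> z L] unfolding K_def by blast
  show ?thesis
  proof (cases "32 * R * K\<^sup>2 \<le> real N * z\<^sup>2 * \<rho>")
    case True
    have "real N * z / (8 * K) \<le> real N * z / (2 * K)"
      using K z by (intro divide_left_mono) auto
    moreover have "real N * z\<^sup>2 * \<rho> / (32 * K\<^sup>2 * R) \<le> real N * z\<^sup>2 * \<rho> / (8 * K\<^sup>2 * R)"
      using K z R \<rho> by (intro divide_left_mono) auto
    ultimately have "E \<le> min (real N * z / (2 * K)) (real N * z\<^sup>2 * \<rho> / (8 * K\<^sup>2 * R))"
      using E1 E2 by linarith
    then have "p \<le> exp (- E)" using tail[folded K_def, OF True] by (meson order_trans exp_le_cancel_iff neg_le_iff_le)
    also have "\<dots> \<le> 4 * real d * exp (- E)" using d1 by simp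
    finally show ?thesis unfolding zeta .
  next
    case False
    then have "real N * z\<^sup>2 * \<rho> / (32 * K\<^sup>2 * R) < 1" using K R by (simp add: divide_less_eq mult_ac)
    then have "E < 1" using E2 by linarith
    have "1 \<le> 4 * exp (- 1 :: real)" using exp_bound[of 1] by (simp add: exp_minus field_simps)
    also have "\<dots> \<le> 4 * real d * exp (- E)" using \<open>E < 1\<close> d1 by (intro mult_mono) auto
    finally show ?thesis using p unfolding zeta by linarith
  qed
qed

lemma generating_set_has_nonzero:
  assumes "\<And>v. \<exists>js. set js \<subseteq> JJ \<and> sum_list js = v"
  obtains J where "J \<in> JJ" "J \<noteq> (0 :: int^'d)"
proof -
  obtain js where js: "set js \<subseteq> JJ" "sum_list js = (\<chi> i. (1::int))" using assms by blast
  have "sum_list js \<noteq> 0" by (simp add: js(2) vec_eq_iff)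
  then have "\<exists>J\<in>set js. J \<noteq> 0" by (induct js) auto
  then show ?thesis using that js(1) by blast
qed

lemma Mnorm_rvec_le_c1_Jstar:
  assumes "sym_posdef M" "finite JJ" "J \<in> JJ"
  shows "Mnorm M (rvec J) \<le> c1 M * Jstar JJ"
  unfolding Jstar_def using assms Mnorm_le_c1_norm[of M "rvec J"] c1_pos[of M]
  by (fastforce intro: order_trans mult_left_mono Max_ge)

lemma Jstar_pos:
  assumes "finite JJ" and gen: "\<And>v. \<exists>js. set js \<subseteq> JJ \<and> sum_list js = v"
  shows "0 < Jstar JJ"
proof -
  obtain J where "J \<in> JJ" "J \<noteq> 0" using generating_set_has_nonzero[OF gen] by blast
  moreover from \<open>J \<noteq> 0\<close> have "rvec J \<noteq> 0" by (simp add: rvec_def vec_eq_iff)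
  ultimately show ?thesis
    unfolding Jstar_def using assms(1) by (meson Max_ge finite_imageI image_eqI order_less_le_trans zero_less_norm_iff)
qed

lemma sum_le_Rstar:
  assumes "compact K" "continuous_on K (\<lambda>y. \<Sum>J\<in>JJ. r J y)" "y \<in> K"
  shows "(\<Sum>J\<in>JJ. r J y) \<le> Rstar JJ r K"
  unfolding Rstar_def using assms
  by (intro cSUP_upper bounded_imp_bdd_above compact_imp_bounded compact_continuous_image)

lemma Lconst_nonneg:
  assumes K: "compact K" "y \<in> K" and cont: "\<And>J. J \<in> JJ \<Longrightarrow> continuous_on K (Dr J)"
  shows "0 \<le> Lconst JJ Dr K"
proof -
  define g where "g y = (\<Sum>i\<in>UNIV. \<Sum>j\<in>UNIV. \<bar>jac JJ Dr y $ i $ j\<bar>)" for y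
  have "continuous_on K g"
    unfolding g_def jac_def using cont by (auto intro!: continuous_intros)
  then have "bounded (g ` K)" using K(1) by (intro compact_imp_bounded compact_continuous_image)
  then obtain B where B: "\<forall>y\<in>K. norm (g y) \<le> B" unfolding bounded_iff by blast
  have "bdd_above ((\<lambda>y. onorm (\<lambda>h. jac JJ Dr y *v h)) ` K)"
  proof (rule bdd_aboveI2)
    fix y assume "y \<in> K"
    then show "onorm (\<lambda>h. jac JJ Dr y *v h) \<le> B"
      using onorm_le_matrix_component_sum[of "jac JJ Dr y"] B unfolding g_def by force
  qed
  moreover have "0 \<le> onorm (\<lambda>h. jac JJ Dr y *v h)"
    by (simp add: onorm_pos_le matrix_vector_mult_linear_continuous_at linear_conv_bounded_linear)
  ultimately show ?thesis unfolding Lconst_def by (rule cSUP_upper2[OF _ K(2)])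
qed

theorem theorem3p7:
  fixes S :: "nat \<Rightarrow> (int^'d) set"
    and Shat :: "(real^'d) set"
    and JJ :: "(int^'d) set"
    and r :: "int^'d \<Rightarrow> real^'d \<Rightarrow> real"
    and Dr :: "int^'d \<Rightarrow> real^'d \<Rightarrow> real^'d"
    and c :: "real^'d"
    and M :: "real^'d^'d"
    and \<rho> \<delta>0 \<delta>1 r0 :: real
  assumes Shat_closed: "closed Shat"
    and S_scaled: "\<And>N x. N > 0 \<Longrightarrow> x \<in> S N \<Longrightarrow> (1 / real N) *\<^sub>R rvec x \<in> Shat"
    and S_jumps: "\<And>N x J. N > 0 \<Longrightarrow> x \<in> S N \<Longrightarrow> J \<in> JJ \<Longrightarrow>
                    r J ((1 / real N) *\<^sub>R rvec x) > 0 \<Longrightarrow> x + J \<in> S N"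
    and JJ_fin: "finite JJ"
    and r_nonneg: "\<And>J y. J \<in> JJ \<Longrightarrow> y \<in> Shat \<Longrightarrow> 0 \<le> r J y"
    and r_deriv: "\<And>J y. J \<in> JJ \<Longrightarrow> y \<in> Shat \<Longrightarrow>
                    (r J has_derivative (\<lambda>h. Dr J y \<bullet> h)) (at y within Shat)"
    and r_C1: "\<And>J. J \<in> JJ \<Longrightarrow> continuous_on Shat (Dr J)"
    and JJ_gen: "\<And>v. \<exists>js. set js \<subseteq> JJ \<and> sum_list js = v"
    and c_int: "c \<in> interior Shat"
    and F_c: "drift JJ r c = 0"
    and r_c_pos: "\<And>J. J \<in> JJ \<Longrightarrow> r J c > 0"
    and rho_pos: "\<rho> > 0"
    and eig: "\<And>lam. is_eigenvalue (jac JJ Dr c) lam \<Longrightarrow> Re lam < - \<rho>"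
    and M_spd: "sym_posdef M"
    and delta0_pos: "\<delta>0 > 0"
    and ball0: "MBall M c \<delta>0 \<subseteq> Shat"
    and contract_c: "\<And>T y. ode_sol (drift JJ r) Shat T y \<Longrightarrow> Mnorm M (y 0 - c) \<le> \<delta>0 \<Longrightarrow>
        \<forall>t\<in>{0..T}. \<exists>D. ((\<lambda>s. Mnorm M (y s - c)) has_real_derivative D) (at t within {0..T})
                       \<and> D \<le> - \<rho> * Mnorm M (y t - c)"
    and contract_pair: "\<And>T y z. ode_sol (drift JJ r) Shat T y \<Longrightarrow> ode_sol (drift JJ r) Shat T z \<Longrightarrow>
        Mnorm M (y 0 - c) \<le> \<delta>0 \<Longrightarrow> Mnorm M (z 0 - c) \<le> \<delta>0 \<Longrightarrow>
        \<forall>t\<in>{0..T}. \<exists>D. ((\<lambda>s. Mnorm M (y s - z s)) has_real_derivative D) (at t within {0..T})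
                       \<and> D \<le> - \<rho> * Mnorm M (y t - z t)"
    and delta1: "0 < \<delta>1" "\<delta>1 \<le> \<delta>0"
    and r0: "r0 > 0" "\<And>J y. J \<in> JJ \<Longrightarrow> y \<in> MBall M c \<delta>1 \<Longrightarrow> r J y > r0"
  shows "\<And>(N::nat) z \<delta> \<pi>. N > 0 \<Longrightarrow> 0 < z \<Longrightarrow> z < \<delta> \<Longrightarrow> \<delta> \<le> \<delta>1 \<Longrightarrow>
     stationary {X \<in> S N. Mnorm M (rvec X - real N *\<^sub>R c) \<le> real N * \<delta>}
        (trunc_rate JJ r N {X \<in> S N. Mnorm M (rvec X - real N *\<^sub>R c) \<le> real N * \<delta>}) \<pi> \<Longrightarrow>
     (\<Sum>X\<in>{X \<in> S N. Mnorm M (rvec X - real N *\<^sub>R c) \<le> real N * \<delta>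
              \<and> Mnorm M (rvec X - real N *\<^sub>R c) > real N * z}. \<pi> X)
       \<le> 2 * zeta CARD('d) N (1 / \<rho>) (Rstar JJ r (MBall M c \<delta>0)) (Jstar JJ)
               ((z * (1 - exp (- 1 / 2)) / (2 * c1 M)) * exp (- Lconst JJ Dr (MBall M c \<delta>0) / \<rho>))"
proof (goal_cases)
  case (1 N z \<delta> \<pi>)
  define R where "R = Rstar JJ r (MBall M c \<delta>0)"
  have MBall: "compact (MBall M c \<delta>0)" "c \<in> MBall M c \<delta>0" "MBall M c \<delta> \<subseteq> MBall M c \<delta>0"
    using compact_MBall[OF M_spd] delta0_pos 1 delta1 by (auto simp: MBall_def)
  have total: "(\<Sum>J\<in>JJ. r J y) \<le> R" if "y \<in> MBall M c \<delta>0" for y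
    unfolding R_def using r_deriv ball0 that
    by (intro sum_le_Rstar MBall continuous_intros has_derivative_continuous_on) (blast intro: has_derivative_subset)
  obtain J1 where "J1 \<in> JJ" using generating_set_has_nonzero[OF JJ_gen] by blast
  then have "0 < (\<Sum>J\<in>JJ. r J c)" using r_c_pos JJ_fin by (intro sum_pos) auto
  then have R: "0 < R" using total[OF MBall(2)] by linarith
  have K: "0 < c1 M * Jstar JJ" using c1_pos[OF M_spd] Jstar_pos[OF JJ_fin JJ_gen] by simp
  have in_ball: "y \<in> MBall M c \<delta>0" if "y \<in> MBall M c \<delta>" for y using that MBall(3) by blast
  have "0 \<le> Lconst JJ Dr (MBall M c \<delta>0)"
    using MBall r_C1 ball0 by (intro Lconst_nonneg) (auto intro: continuous_on_subset)
  moreover have "(\<Sum>X\<in>{X \<in> S N. Mnorm M (rvec X - real N *\<^sub>R c) \<le> real N * \<delta>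
      \<and> Mnorm M (rvec X - real N *\<^sub>R c) > real N * z}. \<pi> X) \<le> 1"
    using 1 by (intro stationary_sum_le_1) auto
  moreover note trunc_stationary_tail_le[where S = S and r = r and JJ = JJ and N = N and \<delta> = \<delta>,
      OF M_spd \<open>0 < N\<close> JJ_fin S_jumps[OF \<open>0 < N\<close>] 1(5) r_nonneg[OF _ subsetD[OF ball0 in_ball]]
      total[OF in_ball] drift_dissipative[OF JJ_fin r_deriv r_C1 M_spd delta0_pos ball0 contract_c in_ball]
      Mnorm_rvec_le_c1_Jstar[OF M_spd JJ_fin] K R rho_pos \<open>0 < z\<close>]
  ultimately show ?case unfolding R_def[symmetric]
    by (intro tail_le_two_zeta c1_pos[OF M_spd] Jstar_pos[OF JJ_fin JJ_gen] R rho_pos \<open>0 < z\<close>) auto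
qed

end
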